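(* Let $G=\mathrm{Aut}(\mathbf{K})$ for a Fraïssé structure $\mathbf{K}$ with exhaustion $\bigcup_n\mathbf{A}_n$, and fix a minimal subflow $M\subseteq S(G)$. The following are equivalent: (1) retractions of $S(G)$ onto $M$ separate points of $S(G)$, i.e. for all $\alpha\neq\gamma$ in $S(G)$ there is a retraction $\phi:S(G)\to M$ with $\phi(\alpha)\neq\phi(\gamma)$; (2) for every $m<\omega$, $B'_m=\mathcal{P}(H_m)$.
   Context: $\mathbf{K}$ is a countably infinite ultrahomogeneous relational structure; $\mathbf{A}_1\subseteq\mathbf{A}_2\subseteq\cdots$ finite substructures, $|\mathbf{A}_n|=n$, union $\mathbf{K}$; $H_n=\mathrm{Emb}(\mathbf{A}_n,\mathbf{K})$. $S(G)$ is the inverse limit of the spaces $\beta H_n$ of ultrafilters along the continuous extensions of restriction maps $H_n\to H_m$, with right $G$-action: $S\in(\alpha g)(m)$ iff $\{x\in H_n:x\circ g|_{\mathbf{A}_m}\in S\}\in\alpha(n)$ (for $n$ with $g(\mathbf{A}_m)\subseteq\mathbf{A}_n$). A minimal subflow is a nonempty closed $G$-invariant set with no proper such subset; a retraction onto $M$ is a continuous $G$-equivariant $\phi:S(G)\to M$ with $\phi|_M=\mathrm{id}$. Identify subsets of $H_n$ with $2^{H_n}$, right action $(\chi\cdot g)(f)=\chi(g\circ f)$; $S\subseteq H_n$ is minimal if $\overline{\chi_S\cdot G}$ is a minimal $G$-flow. $B_n$ is the Boolean algebra generated by the minimal subsets of $H_n$; for $T\subseteq H_m$ and $n\geq m$,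 $i^n_m(T)=\{s\in H_n:s|_{\mathbf{A}_m}\in T\}$; $B'_m=\{T\subseteq H_m:\exists n\geq m\ (i^n_m(T)\in B_n)\}$. *)

theory Defs
  imports "HOL-Library.FuncSet" "HOL-Library.Countable_Set"
begin

text \<open>A relational structure is given by a universe V :: 'a set and an
interpretation R :: 'r => 'a list => bool of the relation symbols
(R r xs: the tuple xs is in the relation r).  Substructures are induced.\<close>

definition preserves :: "('r \<Rightarrow> 'a list \<Rightarrow> bool) \<Rightarrow> 'a set \<Rightarrow> ('a \<Rightarrow> 'a) \<Rightarrow> bool" where
  "preserves R A f \<longleftrightarrow> (\<forall>r xs. set xs \<subseteq> A \<longrightarrow> (R r (map f xs) \<longleftrightarrow> R r xs))"

definition is_emb :: "'a set \<Rightarrow> ('r \<Rightarrow> 'a list \<Rightarrow> bool) \<Rightarrow> 'a set \<Rightarrow> ('a \<Rightarrow> 'a) \<Rightarrow> bool" where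
  "is_emb V R A f \<longleftrightarrow> f ` A \<subseteq> V \<and> inj_on f A \<and> preserves R A f"

definition Emb :: "'a set \<Rightarrow> ('r \<Rightarrow> 'a list \<Rightarrow> bool) \<Rightarrow> 'a set \<Rightarrow> ('a \<Rightarrow> 'a) set" where
  "Emb V R A = {f \<in> extensional A. is_emb V R A f}"

definition Aut :: "'a set \<Rightarrow> ('r \<Rightarrow> 'a list \<Rightarrow> bool) \<Rightarrow> ('a \<Rightarrow> 'a) set" where
  "Aut V R = {g \<in> extensional V. bij_betw g V V \<and> preserves R V g}"

definition ultrahomogeneous :: "'a set \<Rightarrow> ('r \<Rightarrow> 'a list \<Rightarrow> bool) \<Rightarrow> bool" where
  "ultrahomogeneous V R \<longleftrightarrow>
     (\<forall>A B f. finite A \<and> A \<subseteq> V \<and> B \<subseteq> V \<and> bij_betw f A B \<and> preserves R A f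
        \<longrightarrow> (\<exists>g\<in>Aut V R. \<forall>x\<in>A. g x = f x))"

definition exhaustion :: "'a set \<Rightarrow> (nat \<Rightarrow> 'a set) \<Rightarrow> bool" where
  "exhaustion V A \<longleftrightarrow> (\<forall>n. A n \<subseteq> A (Suc n)) \<and> (\<forall>n. finite (A n) \<and> card (A n) = n)
      \<and> (\<Union>n. A n) = V"

definition H :: "'a set \<Rightarrow> ('r \<Rightarrow> 'a list \<Rightarrow> bool) \<Rightarrow> (nat \<Rightarrow> 'a set) \<Rightarrow> nat \<Rightarrow> ('a \<Rightarrow> 'a) set" where
  "H V R A n = Emb V R (A n)"

definition ultrafilter_on :: "'b set \<Rightarrow> 'b set set \<Rightarrow> bool" where
  "ultrafilter_on X U \<longleftrightarrow> U \<subseteq> Pow X \<and> X \<in> U \<and> {} \<notin> U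
     \<and> (\<forall>Y\<in>U. \<forall>Z\<in>U. Y \<inter> Z \<in> U)
     \<and> (\<forall>Y\<in>U. \<forall>Z. Y \<subseteq> Z \<and> Z \<subseteq> X \<longrightarrow> Z \<in> U)
     \<and> (\<forall>Y. Y \<subseteq> X \<longrightarrow> Y \<in> U \<or> X - Y \<in> U)"

text \<open>Continuous extension beta X -> beta Y of a map pi : X -> Y.\<close>
definition push :: "'b set \<Rightarrow> 'c set \<Rightarrow> ('b \<Rightarrow> 'c) \<Rightarrow> 'b set set \<Rightarrow> 'c set set" where
  "push X Y pi p = {T. T \<subseteq> Y \<and> {x\<in>X. pi x \<in> T} \<in> p}"

text \<open>S(G): the inverse limit of the beta H_n along restriction maps.\<close>
definition SG :: "'a set \<Rightarrow> ('r \<Rightarrow> 'a list \<Rightarrow> bool) \<Rightarrow> (nat \<Rightarrow> 'a set)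
     \<Rightarrow> (nat \<Rightarrow> ('a \<Rightarrow> 'a) set set) set" where
  "SG V R A = {\<alpha>. (\<forall>n. ultrafilter_on (H V R A n) (\<alpha> n))
      \<and> (\<forall>m n. m \<le> n \<longrightarrow> \<alpha> m = push (H V R A n) (H V R A m) (\<lambda>x. restrict x (A m)) (\<alpha> n))}"

definition act :: "'a set \<Rightarrow> ('r \<Rightarrow> 'a list \<Rightarrow> bool) \<Rightarrow> (nat \<Rightarrow> 'a set)
     \<Rightarrow> (nat \<Rightarrow> ('a \<Rightarrow> 'a) set set) \<Rightarrow> ('a \<Rightarrow> 'a) \<Rightarrow> (nat \<Rightarrow> ('a \<Rightarrow> 'a) set set)" where
  "act V R A \<alpha> g = (\<lambda>m. let n = (LEAST n. g ` A m \<subseteq> A n) in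
      push (H V R A n) (H V R A m) (\<lambda>x. restrict (x \<circ> g) (A m)) (\<alpha> n))"

definition sg_basic :: "'a set \<Rightarrow> ('r \<Rightarrow> 'a list \<Rightarrow> bool) \<Rightarrow> (nat \<Rightarrow> 'a set)
     \<Rightarrow> nat \<Rightarrow> ('a \<Rightarrow> 'a) set \<Rightarrow> (nat \<Rightarrow> ('a \<Rightarrow> 'a) set set) set" where
  "sg_basic V R A n X = {\<alpha> \<in> SG V R A. X \<in> \<alpha> n}"

definition sg_open :: "'a set \<Rightarrow> ('r \<Rightarrow> 'a list \<Rightarrow> bool) \<Rightarrow> (nat \<Rightarrow> 'a set)
     \<Rightarrow> (nat \<Rightarrow> ('a \<Rightarrow> 'a) set set) set \<Rightarrow> bool" where
  "sg_open V R A U \<longleftrightarrow> U \<subseteq> SG V R A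
     \<and> (\<forall>\<alpha>\<in>U. \<exists>n X. X \<in> \<alpha> n \<and> sg_basic V R A n X \<subseteq> U)"

definition sg_closed :: "'a set \<Rightarrow> ('r \<Rightarrow> 'a list \<Rightarrow> bool) \<Rightarrow> (nat \<Rightarrow> 'a set)
     \<Rightarrow> (nat \<Rightarrow> ('a \<Rightarrow> 'a) set set) set \<Rightarrow> bool" where
  "sg_closed V R A M \<longleftrightarrow> M \<subseteq> SG V R A \<and> sg_open V R A (SG V R A - M)"

definition sg_continuous :: "'a set \<Rightarrow> ('r \<Rightarrow> 'a list \<Rightarrow> bool) \<Rightarrow> (nat \<Rightarrow> 'a set)
     \<Rightarrow> ((nat \<Rightarrow> ('a \<Rightarrow> 'a) set set) \<Rightarrow> (nat \<Rightarrow> ('a \<Rightarrow> 'a) set set)) \<Rightarrow> bool" where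
  "sg_continuous V R A \<phi> \<longleftrightarrow>
     (\<forall>U. sg_open V R A U \<longrightarrow> sg_open V R A {\<alpha> \<in> SG V R A. \<phi> \<alpha> \<in> U})"

definition subflow :: "'a set \<Rightarrow> ('r \<Rightarrow> 'a list \<Rightarrow> bool) \<Rightarrow> (nat \<Rightarrow> 'a set)
     \<Rightarrow> (nat \<Rightarrow> ('a \<Rightarrow> 'a) set set) set \<Rightarrow> bool" where
  "subflow V R A M \<longleftrightarrow> M \<noteq> {} \<and> sg_closed V R A M
     \<and> (\<forall>\<alpha>\<in>M. \<forall>g\<in>Aut V R. act V R A \<alpha> g \<in> M)"

definition minimal_subflow :: "'a set \<Rightarrow> ('r \<Rightarrow> 'a list \<Rightarrow> bool) \<Rightarrow> (nat \<Rightarrow> 'a set)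
     \<Rightarrow> (nat \<Rightarrow> ('a \<Rightarrow> 'a) set set) set \<Rightarrow> bool" where
  "minimal_subflow V R A M \<longleftrightarrow> subflow V R A M
     \<and> (\<forall>N. N \<subseteq> M \<and> subflow V R A N \<longrightarrow> N = M)"

definition retraction :: "'a set \<Rightarrow> ('r \<Rightarrow> 'a list \<Rightarrow> bool) \<Rightarrow> (nat \<Rightarrow> 'a set)
     \<Rightarrow> (nat \<Rightarrow> ('a \<Rightarrow> 'a) set set) set
     \<Rightarrow> ((nat \<Rightarrow> ('a \<Rightarrow> 'a) set set) \<Rightarrow> (nat \<Rightarrow> ('a \<Rightarrow> 'a) set set)) \<Rightarrow> bool" where
  "retraction V R A M \<phi> \<longleftrightarrow> (\<forall>\<alpha>\<in>SG V R A. \<phi> \<alpha> \<in> M) \<and> sg_continuous V R A \<phi>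
     \<and> (\<forall>\<alpha>\<in>SG V R A. \<forall>g\<in>Aut V R. \<phi> (act V R A \<alpha> g) = act V R A (\<phi> \<alpha>) g)
     \<and> (\<forall>\<alpha>\<in>M. \<phi> \<alpha> = \<alpha>)"

text \<open>The flow 2^{H_n}: subsets S of H_n, (S.g) = {f. g o f in S}, product topology.\<close>
definition act2 :: "'a set \<Rightarrow> ('r \<Rightarrow> 'a list \<Rightarrow> bool) \<Rightarrow> (nat \<Rightarrow> 'a set)
     \<Rightarrow> nat \<Rightarrow> ('a \<Rightarrow> 'a) set \<Rightarrow> ('a \<Rightarrow> 'a) \<Rightarrow> ('a \<Rightarrow> 'a) set" where
  "act2 V R A n S g = {f \<in> H V R A n. restrict (g \<circ> f) (A n) \<in> S}"

definition closed2 :: "'a set \<Rightarrow> ('r \<Rightarrow> 'a list \<Rightarrow> bool) \<Rightarrow> (nat \<Rightarrow> 'a set)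
     \<Rightarrow> nat \<Rightarrow> ('a \<Rightarrow> 'a) set set \<Rightarrow> bool" where
  "closed2 V R A n Z \<longleftrightarrow> Z \<subseteq> Pow (H V R A n) \<and>
     (\<forall>T. T \<subseteq> H V R A n \<and> (\<forall>F. finite F \<and> F \<subseteq> H V R A n \<longrightarrow> (\<exists>T'\<in>Z. T' \<inter> F = T \<inter> F))
        \<longrightarrow> T \<in> Z)"

definition orbit_closure2 :: "'a set \<Rightarrow> ('r \<Rightarrow> 'a list \<Rightarrow> bool) \<Rightarrow> (nat \<Rightarrow> 'a set)
     \<Rightarrow> nat \<Rightarrow> ('a \<Rightarrow> 'a) set \<Rightarrow> ('a \<Rightarrow> 'a) set set" where
  "orbit_closure2 V R A n S = {T. T \<subseteq> H V R A n \<and>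
     (\<forall>F. finite F \<and> F \<subseteq> H V R A n \<longrightarrow> (\<exists>g\<in>Aut V R. act2 V R A n S g \<inter> F = T \<inter> F))}"

definition minimal_flow2 :: "'a set \<Rightarrow> ('r \<Rightarrow> 'a list \<Rightarrow> bool) \<Rightarrow> (nat \<Rightarrow> 'a set)
     \<Rightarrow> nat \<Rightarrow> ('a \<Rightarrow> 'a) set set \<Rightarrow> bool" where
  "minimal_flow2 V R A n Y \<longleftrightarrow> Y \<noteq> {} \<and> closed2 V R A n Y
     \<and> (\<forall>T\<in>Y. \<forall>g\<in>Aut V R. act2 V R A n T g \<in> Y)
     \<and> (\<forall>Z. Z \<subseteq> Y \<and> Z \<noteq> {} \<and> closed2 V R A n Z \<and> (\<forall>T\<in>Z. \<forall>g\<in>Aut V R. act2 V R A n T g \<in> Z)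
          \<longrightarrow> Z = Y)"

definition minimal_subset :: "'a set \<Rightarrow> ('r \<Rightarrow> 'a list \<Rightarrow> bool) \<Rightarrow> (nat \<Rightarrow> 'a set)
     \<Rightarrow> nat \<Rightarrow> ('a \<Rightarrow> 'a) set \<Rightarrow> bool" where
  "minimal_subset V R A n S \<longleftrightarrow> S \<subseteq> H V R A n \<and> minimal_flow2 V R A n (orbit_closure2 V R A n S)"

inductive_set gen_ba :: "'b set \<Rightarrow> 'b set set \<Rightarrow> 'b set set" for X Gs where
  gen: "S \<in> Gs \<Longrightarrow> S \<in> gen_ba X Gs"
| top: "X \<in> gen_ba X Gs"
| compl: "S \<in> gen_ba X Gs \<Longrightarrow> X - S \<in> gen_ba X Gs"
| un: "S \<in> gen_ba X Gs \<Longrightarrow> T \<in> gen_ba X Gs \<Longrightarrow> S \<union> T \<in> gen_ba X Gs"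

definition Bn :: "'a set \<Rightarrow> ('r \<Rightarrow> 'a list \<Rightarrow> bool) \<Rightarrow> (nat \<Rightarrow> 'a set)
     \<Rightarrow> nat \<Rightarrow> ('a \<Rightarrow> 'a) set set" where
  "Bn V R A n = gen_ba (H V R A n) {S. minimal_subset V R A n S}"

definition iup :: "'a set \<Rightarrow> ('r \<Rightarrow> 'a list \<Rightarrow> bool) \<Rightarrow> (nat \<Rightarrow> 'a set)
     \<Rightarrow> nat \<Rightarrow> nat \<Rightarrow> ('a \<Rightarrow> 'a) set \<Rightarrow> ('a \<Rightarrow> 'a) set" where
  "iup V R A n m T = {s \<in> H V R A n. restrict s (A m) \<in> T}"

definition Bprime :: "'a set \<Rightarrow> ('r \<Rightarrow> 'a list \<Rightarrow> bool) \<Rightarrow> (nat \<Rightarrow> 'a set)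
     \<Rightarrow> nat \<Rightarrow> ('a \<Rightarrow> 'a) set set" where
  "Bprime V R A m = {T. T \<subseteq> H V R A m \<and> (\<exists>n\<ge>m. iup V R A n m T \<in> Bn V R A n)}"

end

theory Submission
  imports Defs
begin

text \<open>
  The space \<open>S(G)\<close> is the Ellis semigroup of \<open>G\<close>: extending the right action \<open>T\<cdot>g\<close> of \<open>G\<close> on subsets
  of \<open>H\<^sub>n\<close> to \<open>T\<cdot>p\<close> for \<open>p \<in> S(G)\<close>, the product is given by \<open>T \<in> p\<cdot>\<alpha> \<longleftrightarrow> T\<cdot>p \<in> \<alpha>\<close>, and it is
  continuous in \<open>\<alpha>\<close>. Since the principal ultrafilters are dense, every retraction \<open>\<phi>\<close> onto \<open>M\<close> is
  left multiplication by \<open>\<phi>(1) \<in> M\<close>, and conversely left multiplication by an idempotent of \<open>M\<close> is a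
  retraction. For \<open>p \<in> M\<close> the translates \<open>T\<cdot>p\<close> are minimal subsets, and by Ellis-Numakura every
  minimal subset \<open>T\<close> is fixed by an idempotent of \<open>M\<close>.

  So retractions separate \<open>\<alpha>\<close> and \<open>\<gamma>\<close> iff some minimal subset does. If \<open>B'\<^sub>m = \<P>(H\<^sub>m)\<close> for all \<open>m\<close>, a
  set separating \<open>\<alpha> \<noteq> \<gamma>\<close> lifts into the algebra generated by the minimal subsets at a higher level,
  so a minimal subset separates them. If \<open>S \<notin> B'\<^sub>m\<close>, then no finite family of minimal subsets
  separates \<open>S\<close> from its complement at any level, and compactness produces \<open>\<alpha>, \<gamma>\<close> separated by \<open>S\<close> but
  agreeing on all minimal subsets.
\<close>

section \<open>Ultrafilters\<close>

context
  fixes X :: "'b set" and U :: "'b set set"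
  assumes uf: "ultrafilter_on X U"
begin

lemma ultrafilter_on_subset: "Y \<in> U \<Longrightarrow> Y \<subseteq> X"
  using uf by (auto simp: ultrafilter_on_def)

lemma ultrafilter_on_top: "X \<in> U"
  using uf by (auto simp: ultrafilter_on_def)

lemma ultrafilter_on_empty: "{} \<notin> U"
  using uf by (auto simp: ultrafilter_on_def)

lemma ultrafilter_on_nonempty: "Y \<in> U \<Longrightarrow> Y \<noteq> {}"
  using ultrafilter_on_empty by auto

lemma ultrafilter_on_Int: "Y \<in> U \<Longrightarrow> Z \<in> U \<Longrightarrow> Y \<inter> Z \<in> U"
  using uf by (auto simp: ultrafilter_on_def)

lemma ultrafilter_on_mono: "Y \<in> U \<Longrightarrow> Y \<subseteq> Z \<Longrightarrow> Z \<subseteq> X \<Longrightarrow> Z \<in> U"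
  using uf unfolding ultrafilter_on_def by blast

lemma ultrafilter_on_Diff_iff: "Y \<subseteq> X \<Longrightarrow> X - Y \<in> U \<longleftrightarrow> Y \<notin> U"
proof
  assume "X - Y \<in> U"
  then show "Y \<notin> U"
    using ultrafilter_on_Int[of Y "X - Y"] ultrafilter_on_empty by auto
next
  assume "Y \<subseteq> X" "Y \<notin> U"
  then show "X - Y \<in> U" using uf unfolding ultrafilter_on_def by blast
qed

lemma ultrafilter_on_Int_iff: "Y \<subseteq> X \<Longrightarrow> Z \<subseteq> X \<Longrightarrow> Y \<inter> Z \<in> U \<longleftrightarrow> Y \<in> U \<and> Z \<in> U"
  using ultrafilter_on_Int ultrafilter_on_mono[of "Y \<inter> Z"] by blast

lemma ultrafilter_on_Un_iff: "Y \<subseteq> X \<Longrightarrow> Z \<subseteq> X \<Longrightarrow> Y \<union> Z \<in> U \<longleftrightarrow> Y \<in> U \<or> Z \<in> U"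
proof -
  assume YZ: "Y \<subseteq> X" "Z \<subseteq> X"
  have "Y \<union> Z \<in> U \<longleftrightarrow> (X - Y) \<inter> (X - Z) \<notin> U"
    using ultrafilter_on_Diff_iff[of "Y \<union> Z"] YZ by (simp add: Diff_Un)
  also have "\<dots> \<longleftrightarrow> \<not> (X - Y \<in> U \<and> X - Z \<in> U)"
    by (subst ultrafilter_on_Int_iff) auto
  also have "\<dots> \<longleftrightarrow> Y \<in> U \<or> Z \<in> U"
    by (simp add: ultrafilter_on_Diff_iff YZ)
  finally show ?thesis .
qed

lemma ultrafilter_on_INT: "finite F \<Longrightarrow> (\<And>y. y \<in> F \<Longrightarrow> P y \<in> U) \<Longrightarrow> X \<inter> (\<Inter>y\<in>F. P y) \<in> U"
proof (induction F rule: finite_induct)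
  case (insert a F)
  then have "P a \<inter> (X \<inter> (\<Inter>y\<in>F. P y)) \<in> U" using ultrafilter_on_Int by simp
  then show ?case by (simp add: Int_left_commute)
qed (simp add: ultrafilter_on_top)

lemma ultrafilter_on_cong:
  assumes "B \<in> U" "Y \<inter> B = Z \<inter> B" "Y \<subseteq> X" "Z \<subseteq> X"
  shows "Y \<in> U \<longleftrightarrow> Z \<in> U"
proof -
  have "B \<subseteq> X" using assms(1) by (rule ultrafilter_on_subset)
  then have "Y \<in> U \<longleftrightarrow> Y \<inter> B \<in> U" "Z \<in> U \<longleftrightarrow> Z \<inter> B \<in> U"
    using ultrafilter_on_Int_iff[of Y B] ultrafilter_on_Int_iff[of Z B] assms by simp_all
  then show ?thesis using assms(2) by simp
qed

end

lemma ultrafilter_on_eqI: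
  assumes u: "ultrafilter_on X U" and u': "ultrafilter_on X U'" and sub: "U \<subseteq> U'"
  shows "U = U'"
proof (intro subset_antisym subsetI)
  fix Y assume "Y \<in> U'"
  then have "Y \<subseteq> X" "X - Y \<notin> U'" using ultrafilter_on_subset[OF u'] ultrafilter_on_Diff_iff[OF u'] by auto
  moreover have "Y \<notin> U \<Longrightarrow> X - Y \<in> U'" using ultrafilter_on_Diff_iff[OF u \<open>Y \<subseteq> X\<close>] sub by auto
  ultimately show "Y \<in> U" by blast
qed (use sub in auto)

lemma ultrafilter_on_principal: "x \<in> X \<Longrightarrow> ultrafilter_on X {T. T \<subseteq> X \<and> x \<in> T}"
  unfolding ultrafilter_on_def by auto

lemma ultrafilter_on_push:
  assumes W: "ultrafilter_on Z W" and f: "\<And>z. z \<in> Z \<Longrightarrow> f z \<in> X"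
  shows "ultrafilter_on X (push Z X f W)"
  unfolding ultrafilter_on_def push_def
proof (intro conjI ballI allI impI)
  have "{z \<in> Z. f z \<in> X} = Z" using f by blast
  then show "X \<in> {T. T \<subseteq> X \<and> {z \<in> Z. f z \<in> T} \<in> W}" using ultrafilter_on_top[OF W] by simp
  show "{} \<notin> {T. T \<subseteq> X \<and> {z \<in> Z. f z \<in> T} \<in> W}" using ultrafilter_on_empty[OF W] by simp
next
  fix Y Y' assume "Y \<in> {T. T \<subseteq> X \<and> {z \<in> Z. f z \<in> T} \<in> W}" "Y' \<in> {T. T \<subseteq> X \<and> {z \<in> Z. f z \<in> T} \<in> W}"
  then have "{z \<in> Z. f z \<in> Y} \<inter> {z \<in> Z. f z \<in> Y'} \<in> W" "Y \<inter> Y' \<subseteq> X"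
    using ultrafilter_on_Int[OF W] by auto
  moreover have "{z \<in> Z. f z \<in> Y} \<inter> {z \<in> Z. f z \<in> Y'} = {z \<in> Z. f z \<in> Y \<inter> Y'}" by blast
  ultimately show "Y \<inter> Y' \<in> {T. T \<subseteq> X \<and> {z \<in> Z. f z \<in> T} \<in> W}" by simp
next
  fix Y Y' assume "Y \<in> {T. T \<subseteq> X \<and> {z \<in> Z. f z \<in> T} \<in> W}" "Y \<subseteq> Y' \<and> Y' \<subseteq> X"
  then have "{z \<in> Z. f z \<in> Y} \<in> W" "{z \<in> Z. f z \<in> Y} \<subseteq> {z \<in> Z. f z \<in> Y'}" "Y' \<subseteq> X" by auto
  then show "Y' \<in> {T. T \<subseteq> X \<and> {z \<in> Z. f z \<in> T} \<in> W}"
    using ultrafilter_on_mono[OF W] by blast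
next
  fix Y assume Y: "Y \<subseteq> X"
  have "{z \<in> Z. f z \<in> X - Y} = Z - {z \<in> Z. f z \<in> Y}" using f by blast
  moreover have "{z \<in> Z. f z \<in> Y} \<in> W \<or> Z - {z \<in> Z. f z \<in> Y} \<in> W"
    using ultrafilter_on_Diff_iff[OF W, of "{z \<in> Z. f z \<in> Y}"] by blast
  ultimately show "Y \<in> {T. T \<subseteq> X \<and> {z \<in> Z. f z \<in> T} \<in> W} \<or> X - Y \<in> {T. T \<subseteq> X \<and> {z \<in> Z. f z \<in> T} \<in> W}"
    using Y by auto
qed auto

definition filter_on :: "'b set \<Rightarrow> 'b set set \<Rightarrow> bool" where
  "filter_on X F \<longleftrightarrow> F \<subseteq> Pow X \<and> {} \<notin> F \<and> (\<forall>a\<in>F. \<forall>b\<in>F. a \<inter> b \<in> F)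
     \<and> (\<forall>a\<in>F. \<forall>c. a \<subseteq> c \<and> c \<subseteq> X \<longrightarrow> c \<in> F)"

lemma filter_onI:
  "F \<subseteq> Pow X \<Longrightarrow> {} \<notin> F \<Longrightarrow> (\<And>a b. a \<in> F \<Longrightarrow> b \<in> F \<Longrightarrow> a \<inter> b \<in> F)
    \<Longrightarrow> (\<And>a c. a \<in> F \<Longrightarrow> a \<subseteq> c \<Longrightarrow> c \<subseteq> X \<Longrightarrow> c \<in> F) \<Longrightarrow> filter_on X F"
  unfolding filter_on_def by blast

lemma filter_on_subset: "filter_on X F \<Longrightarrow> a \<in> F \<Longrightarrow> a \<subseteq> X"
  unfolding filter_on_def by blast

lemma filter_on_empty: "filter_on X F \<Longrightarrow> {} \<notin> F"
  unfolding filter_on_def by blast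

lemma filter_on_Int: "filter_on X F \<Longrightarrow> a \<in> F \<Longrightarrow> b \<in> F \<Longrightarrow> a \<inter> b \<in> F"
  unfolding filter_on_def by blast

lemma filter_on_mono: "filter_on X F \<Longrightarrow> a \<in> F \<Longrightarrow> a \<subseteq> c \<Longrightarrow> c \<subseteq> X \<Longrightarrow> c \<in> F"
  unfolding filter_on_def by blast

lemma filter_on_Union_chain:
  assumes ne: "\<C> \<noteq> {}" and filt: "\<And>F. F \<in> \<C> \<Longrightarrow> filter_on X F"
    and chain: "\<And>F G. F \<in> \<C> \<Longrightarrow> G \<in> \<C> \<Longrightarrow> F \<subseteq> G \<or> G \<subseteq> F"
  shows "filter_on X (\<Union>\<C>)"
proof (rule filter_onI)
  fix a b assume "a \<in> \<Union>\<C>" "b \<in> \<Union>\<C>"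
  then obtain F G where FG: "F \<in> \<C>" "G \<in> \<C>" "a \<in> F" "b \<in> G" by blast
  show "a \<inter> b \<in> \<Union>\<C>"
  proof (cases "F \<subseteq> G")
    case True
    then show ?thesis using filter_on_Int[OF filt[OF FG(2)]] FG by blast
  next
    case False
    then have "G \<subseteq> F" using chain FG by blast
    then show ?thesis using filter_on_Int[OF filt[OF FG(1)]] FG by blast
  qed
next
  fix a c assume "a \<in> \<Union>\<C>" "a \<subseteq> c" "c \<subseteq> X"
  then obtain F where "F \<in> \<C>" "a \<in> F" by blast
  then show "c \<in> \<Union>\<C>" using filter_on_mono[OF filt _ \<open>a \<subseteq> c\<close> \<open>c \<subseteq> X\<close>] by blast
next
  show "\<Union>\<C> \<subseteq> Pow X" using filter_on_subset[OF filt] by blast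
  show "{} \<notin> \<Union>\<C>" using filter_on_empty[OF filt] by blast
qed

text \<open>A maximal proper filter decides every \<open>Y\<close>: if no member misses \<open>Y\<close>, then adjoining \<open>Y\<close> gives
  a proper filter, which by maximality is the original one.\<close>
lemma maximal_filter_on_ultrafilter_on:
  assumes F: "filter_on X F" and X: "X \<in> F"
    and max: "\<And>G. filter_on X G \<Longrightarrow> F \<subseteq> G \<Longrightarrow> G = F"
  shows "ultrafilter_on X F"
  unfolding ultrafilter_on_def
proof (intro conjI allI impI ballI)
  fix Y assume Y: "Y \<subseteq> X"
  show "Y \<in> F \<or> X - Y \<in> F"
  proof (cases "\<exists>a\<in>F. a \<inter> Y = {}")
    case True
    then obtain a where "a \<in> F" "a \<subseteq> X - Y" using filter_on_subset[OF F] by blast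
    then show ?thesis using filter_on_mono[OF F] by blast
  next
    case False
    define G where "G = {c. c \<subseteq> X \<and> (\<exists>a\<in>F. a \<inter> Y \<subseteq> c)}"
    have "filter_on X G"
    proof (rule filter_onI)
      fix a b assume "a \<in> G" "b \<in> G"
      then obtain a' b' where "a' \<in> F" "b' \<in> F" "a' \<inter> Y \<subseteq> a" "b' \<inter> Y \<subseteq> b" "a \<subseteq> X" "b \<subseteq> X"
        unfolding G_def by blast
      moreover have "a' \<inter> b' \<in> F" using filter_on_Int[OF F] \<open>a' \<in> F\<close> \<open>b' \<in> F\<close> .
      ultimately show "a \<inter> b \<in> G" unfolding G_def by blast
    next
      fix a c assume "a \<in> G" "a \<subseteq> c" "c \<subseteq> X"
      then show "c \<in> G" unfolding G_def by blast
    qed (use False in \<open>auto simp: G_def\<close>)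
    moreover have "F \<subseteq> G" using filter_on_subset[OF F] unfolding G_def by blast
    ultimately have "G = F" by (rule max)
    moreover have "Y \<in> G" using X Y unfolding G_def by blast
    ultimately show ?thesis by blast
  qed
qed (use F X in \<open>auto simp: filter_on_def\<close>)

lemma ultrafilter_on_exists:
  assumes B: "B \<subseteq> Pow X" "B \<noteq> {}" "{} \<notin> B"
    and directed: "\<And>a b. a \<in> B \<Longrightarrow> b \<in> B \<Longrightarrow> \<exists>c\<in>B. c \<subseteq> a \<inter> b"
  shows "\<exists>U. ultrafilter_on X U \<and> B \<subseteq> U"
proof -
  define F0 where "F0 = {a. a \<subseteq> X \<and> (\<exists>b\<in>B. b \<subseteq> a)}"
  define \<F> where "\<F> = {F. F0 \<subseteq> F \<and> filter_on X F}"
  have F0: "filter_on X F0"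
  proof (rule filter_onI)
    fix a b assume "a \<in> F0" "b \<in> F0"
    then obtain a' b' where "a' \<in> B" "b' \<in> B" "a' \<subseteq> a" "b' \<subseteq> b" "a \<subseteq> X" "b \<subseteq> X"
      unfolding F0_def by blast
    moreover obtain c where "c \<in> B" "c \<subseteq> a' \<inter> b'" using directed[OF \<open>a' \<in> B\<close> \<open>b' \<in> B\<close>] by blast
    ultimately have "c \<in> B" "c \<subseteq> a \<inter> b" "a \<inter> b \<subseteq> X" by auto
    then show "a \<inter> b \<in> F0" unfolding F0_def by blast
  next
    fix a c assume "a \<in> F0" "a \<subseteq> c" "c \<subseteq> X"
    then show "c \<in> F0" unfolding F0_def by blast
  next
    show "F0 \<subseteq> Pow X" unfolding F0_def by blast
    show "{} \<notin> F0" using B(3) unfolding F0_def by auto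
  qed
  have "\<exists>F\<in>\<F>. \<forall>G\<in>\<F>. F \<subseteq> G \<longrightarrow> G = F"
  proof (rule subset_Zorn_nonempty)
    show "\<F> \<noteq> {}" using F0 unfolding \<F>_def by blast
  next
    fix \<C> assume ne: "\<C> \<noteq> {}" and ch: "subset.chain \<F> \<C>"
    have "filter_on X (\<Union>\<C>)"
      by (rule filter_on_Union_chain[OF ne]) (use ch in \<open>auto simp: subset_chain_def \<F>_def\<close>)
    moreover have "F0 \<subseteq> \<Union>\<C>" using ne ch unfolding subset_chain_def \<F>_def by blast
    ultimately show "\<Union>\<C> \<in> \<F>" unfolding \<F>_def by blast
  qed
  then obtain F where F: "F \<in> \<F>" and max: "\<And>G. G \<in> \<F> \<Longrightarrow> F \<subseteq> G \<Longrightarrow> G = F" by blast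
  have "B \<subseteq> F0" "X \<in> F0" using B unfolding F0_def by auto
  moreover have "ultrafilter_on X F"
  proof (rule maximal_filter_on_ultrafilter_on)
    show "filter_on X F" "X \<in> F" using F \<open>X \<in> F0\<close> unfolding \<F>_def by blast+
    show "G = F" if "filter_on X G" "F \<subseteq> G" for G
      using max[of G] F that unfolding \<F>_def by blast
  qed
  ultimately show ?thesis using F unfolding \<F>_def by blast
qed

lemma Inter_Zorn_nonempty:
  assumes "\<A> \<noteq> {}" and ch: "\<And>\<C>. \<C> \<noteq> {} \<Longrightarrow> subset.chain \<A> \<C> \<Longrightarrow> \<Inter>\<C> \<in> \<A>"
  shows "\<exists>M\<in>\<A>. \<forall>X\<in>\<A>. X \<subseteq> M \<longrightarrow> X = M"
proof -
  have "\<exists>M\<in>uminus ` \<A>. \<forall>X\<in>uminus ` \<A>. M \<subseteq> X \<longrightarrow> X = M"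
  proof (rule subset_Zorn_nonempty)
    fix \<C> assume "\<C> \<noteq> {}" "subset.chain (uminus ` \<A>) \<C>"
    then have "uminus ` \<C> \<noteq> {}" "subset.chain \<A> (uminus ` \<C>)"
      unfolding subset_chain_def by (auto simp: image_subset_iff)
    then have "\<Inter>(uminus ` \<C>) \<in> \<A>" by (rule ch)
    then have "- \<Inter>(uminus ` \<C>) \<in> uminus ` \<A>" by blast
    then show "\<Union>\<C> \<in> uminus ` \<A>" by (simp add: Compl_INT)
  qed (use assms in auto)
  then obtain M' where M': "M' \<in> uminus ` \<A>" "\<forall>X\<in>uminus ` \<A>. M' \<subseteq> X \<longrightarrow> X = M'" by blast
  then obtain M where M: "M \<in> \<A>" "M' = - M" by blast
  show ?thesis
  proof (intro bexI[OF _ M(1)] ballI impI)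
    fix X assume "X \<in> \<A>" "X \<subseteq> M"
    then have "- X = M'" using M' M(2) by (simp add: image_iff)
    then show "X = M" using M(2) by simp
  qed
qed


section \<open>Generated Boolean algebras\<close>

lemma gen_ba_subset: assumes "Gs \<subseteq> Pow X" "S \<in> gen_ba X Gs" shows "S \<subseteq> X"
  using assms(2) by (induction rule: gen_ba.induct) (use assms(1) in auto)

lemma gen_ba_empty: "{} \<in> gen_ba X Gs"
  using gen_ba.compl[OF gen_ba.top, of X Gs] by simp

lemma gen_ba_Int:
  assumes "Gs \<subseteq> Pow X" "S \<in> gen_ba X Gs" "T \<in> gen_ba X Gs"
  shows "S \<inter> T \<in> gen_ba X Gs"
proof -
  have "X - ((X - S) \<union> (X - T)) \<in> gen_ba X Gs" by (intro gen_ba.intros assms(2,3))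
  moreover have "X - ((X - S) \<union> (X - T)) = S \<inter> T" using gen_ba_subset[OF assms(1)] assms(2,3) by blast
  ultimately show ?thesis by simp
qed

lemma gen_ba_Union: "finite F \<Longrightarrow> (\<And>S. S \<in> F \<Longrightarrow> S \<in> gen_ba X Gs) \<Longrightarrow> \<Union>F \<in> gen_ba X Gs"
  by (induction F rule: finite_induct) (auto intro: gen_ba.intros gen_ba_empty)

lemma gen_ba_atom:
  assumes g: "Gs \<subseteq> Pow X" and f: "finite C" and c: "C \<subseteq> gen_ba X Gs"
  shows "D \<subseteq> C \<Longrightarrow> {z\<in>X. \<forall>c\<in>C. z \<in> c \<longleftrightarrow> c \<in> D} \<in> gen_ba X Gs"
  using f c
proof (induction C arbitrary: D)
  case empty then show ?case by (simp add: gen_ba.top)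
next
  case (insert c C)
  have DC: "D - {c} \<subseteq> C" using insert.prems insert.hyps by auto
  have IH: "{z\<in>X. \<forall>d\<in>C. z \<in> d \<longleftrightarrow> d \<in> D - {c}} \<in> gen_ba X Gs"
    using insert.IH[OF DC] insert.prems by simp
  have cg: "c \<in> gen_ba X Gs" using insert by auto
  have cx: "c \<subseteq> X" using gen_ba_subset[OF g cg] .
  show ?case
  proof (cases "c \<in> D")
    case True
    have "{z\<in>X. \<forall>c'\<in>insert c C. z \<in> c' \<longleftrightarrow> c' \<in> D} = {z\<in>X. \<forall>d\<in>C. z \<in> d \<longleftrightarrow> d \<in> D - {c}} \<inter> c"
      using True insert.hyps(2) cx by auto
    then show ?thesis using gen_ba_Int[OF g IH cg] by simp
  next
    case False
    have cc: "X - c \<in> gen_ba X Gs" using cg by (rule gen_ba.compl)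
    have "{z\<in>X. \<forall>c'\<in>insert c C. z \<in> c' \<longleftrightarrow> c' \<in> D} = {z\<in>X. \<forall>d\<in>C. z \<in> d \<longleftrightarrow> d \<in> D - {c}} \<inter> (X - c)"
      using False insert.hyps(2) by auto
    then show ?thesis using gen_ba_Int[OF g IH cc] by simp
  qed
qed

text \<open>Otherwise \<open>S\<close> would be a finite union of atoms of \<open>C\<close>.\<close>
lemma not_in_gen_ba_inseparable:
  assumes Gs: "Gs \<subseteq> Pow X" and C: "finite C" "C \<subseteq> gen_ba X Gs"
    and S: "S \<subseteq> X" "S \<notin> gen_ba X Gs"
  shows "\<exists>x\<in>S. \<exists>y\<in>X - S. \<forall>c\<in>C. x \<in> c \<longleftrightarrow> y \<in> c"
proof (rule ccontr)
  assume sep: "\<not> ?thesis"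
  define atom where "atom D = {z\<in>X. \<forall>c\<in>C. z \<in> c \<longleftrightarrow> c \<in> D}" for D
  define \<D> where "\<D> = {D. D \<subseteq> C \<and> atom D \<subseteq> S}"
  have atom_sub: "atom {c\<in>C. z \<in> c} \<subseteq> S" if "z \<in> S" for z
  proof
    fix w assume "w \<in> atom {c\<in>C. z \<in> c}"
    then have "w \<in> X" "\<forall>c\<in>C. z \<in> c \<longleftrightarrow> w \<in> c" unfolding atom_def by auto
    then show "w \<in> S" using sep that by blast
  qed
  have "S = \<Union>(atom ` \<D>)"
  proof (intro subset_antisym subsetI)
    fix z assume z: "z \<in> S"
    then have "z \<in> atom {c\<in>C. z \<in> c}" "{c\<in>C. z \<in> c} \<in> \<D>"
      using S(1) atom_sub unfolding atom_def \<D>_def by auto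
    then show "z \<in> \<Union>(atom ` \<D>)" by blast
  qed (auto simp: \<D>_def)
  moreover have "\<Union>(atom ` \<D>) \<in> gen_ba X Gs"
  proof (rule gen_ba_Union)
    have "\<D> \<subseteq> Pow C" unfolding \<D>_def by blast
    then show "finite (atom ` \<D>)" using C(1) by (simp add: finite_subset)
    show "T \<in> gen_ba X Gs" if "T \<in> atom ` \<D>" for T
      using that gen_ba_atom[OF Gs C] unfolding atom_def \<D>_def by blast
  qed
  ultimately show False using S(2) by simp
qed

lemma ultrafilter_on_gen_ba_cong:
  assumes U: "ultrafilter_on X U" and U': "ultrafilter_on X U'" and Gs: "Gs \<subseteq> Pow X"
    and agree: "\<And>G. G \<in> Gs \<Longrightarrow> G \<in> U \<longleftrightarrow> G \<in> U'"
    and Y: "Y \<in> gen_ba X Gs"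
  shows "Y \<in> U \<longleftrightarrow> Y \<in> U'"
  using Y
proof (induction rule: gen_ba.induct)
  case (gen S) then show ?case by (rule agree)
next
  case top then show ?case using ultrafilter_on_top[OF U] ultrafilter_on_top[OF U'] by blast
next
  case (compl S)
  have "S \<subseteq> X" using gen_ba_subset[OF Gs compl.hyps] .
  then show ?case using compl.IH by (simp add: ultrafilter_on_Diff_iff[OF U] ultrafilter_on_Diff_iff[OF U'])
next
  case (un S T)
  have "S \<subseteq> X" "T \<subseteq> X" using gen_ba_subset[OF Gs un.hyps(1)] gen_ba_subset[OF Gs un.hyps(2)] .
  then show ?case using un.IH by (simp add: ultrafilter_on_Un_iff[OF U] ultrafilter_on_Un_iff[OF U'])
qed

section \<open>Embeddings and automorphisms\<close>

lemma preserves_comp: "preserves R B f \<Longrightarrow> preserves R C g \<Longrightarrow> f ` B \<subseteq> C \<Longrightarrow> preserves R B (g \<circ> f)"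
  unfolding preserves_def
proof (intro allI impI)
  fix r xs assume pf: "\<forall>r xs. set xs \<subseteq> B \<longrightarrow> R r (map f xs) = R r xs"
    and pg: "\<forall>r xs. set xs \<subseteq> C \<longrightarrow> R r (map g xs) = R r xs" and fb: "f ` B \<subseteq> C" and xs: "set xs \<subseteq> B"
  have "set (map f xs) \<subseteq> C" using xs fb by auto
  then have "R r (map g (map f xs)) = R r (map f xs)" using pg by blast
  then show "R r (map (g \<circ> f) xs) = R r xs" using pf xs by simp
qed

lemma preserves_cong: "preserves R B f \<Longrightarrow> (\<And>x. x \<in> B \<Longrightarrow> f x = g x) \<Longrightarrow> preserves R B g"
  unfolding preserves_def
proof (intro allI impI)
  fix r xs assume pf: "\<forall>r xs. set xs \<subseteq> B \<longrightarrow> R r (map f xs) = R r xs"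
    and e: "\<And>x. x \<in> B \<Longrightarrow> f x = g x" and xs: "set xs \<subseteq> B"
  have "map f xs = map g xs" using xs e by (intro map_cong) auto
  then show "R r (map g xs) = R r xs" using pf xs by metis
qed

lemma preserves_subset: "preserves R B f \<Longrightarrow> C \<subseteq> B \<Longrightarrow> preserves R C f"
  unfolding preserves_def by blast

lemma preserves_id: "preserves R B id"
  unfolding preserves_def by simp

lemma restrict_comp_restrict: "y ` C \<subseteq> B \<Longrightarrow> restrict (restrict f B \<circ> y) C = restrict (f \<circ> y) C"
  by (intro restrict_ext) auto

lemma restrict_comp_restrict': "restrict (f \<circ> restrict y C) C = restrict (f \<circ> y) C"
  by (intro restrict_ext) auto

locale fraisse_exhaustion =
  fixes V :: "'a set" and R :: "'r \<Rightarrow> 'a list \<Rightarrow> bool" and A :: "nat \<Rightarrow> 'a set"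
  assumes homogeneous: "ultrahomogeneous V R" and exhaustive: "exhaustion V A"
begin

abbreviation HH where "HH n \<equiv> H V R A n"
abbreviation SS where "SS \<equiv> SG V R A"
abbreviation GG where "GG \<equiv> Aut V R"
abbreviation lift where "lift n m T \<equiv> iup V R A n m T"

text \<open>Elements of \<open>H\<^sub>n\<close> and of \<open>G\<close> are extensional on \<open>A\<^sub>n\<close> and \<open>V\<close>, so restrictions are used
  throughout in place of compositions with inclusions.\<close>

lemma A_Suc_subset: "A n \<subseteq> A (Suc n)" using exhaustive unfolding exhaustion_def by blast
lemma A_mono: "m \<le> n \<Longrightarrow> A m \<subseteq> A n" using lift_Suc_mono_le[of A, OF A_Suc_subset] by blast
lemma A_subset_V: "A n \<subseteq> V" using exhaustive unfolding exhaustion_def by blast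
lemma finite_A: "finite (A n)" using exhaustive unfolding exhaustion_def by blast
lemma V_covered: "x \<in> V \<Longrightarrow> \<exists>n. x \<in> A n" using exhaustive unfolding exhaustion_def by blast

lemma finite_subset_some_A: "finite F \<Longrightarrow> F \<subseteq> V \<Longrightarrow> \<exists>N. F \<subseteq> A N"
proof (induction F rule: finite_induct)
  case empty then show ?case by auto
next
  case (insert x F)
  then obtain N where N: "F \<subseteq> A N" by auto
  obtain n where n: "x \<in> A n" using V_covered insert.prems by auto
  have "F \<subseteq> A (max N n)" "x \<in> A (max N n)" using N n A_mono[of N "max N n"] A_mono[of n "max N n"] by auto
  then show ?case by blast
qed

lemma H_iff: "x \<in> HH n \<longleftrightarrow> x \<in> extensional (A n) \<and> x ` A n \<subseteq> V \<and> inj_on x (A n) \<and> preserves R (A n) x"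
  unfolding H_def Emb_def is_emb_def by blast

lemma Aut_iff: "g \<in> GG \<longleftrightarrow> g \<in> extensional V \<and> bij_betw g V V \<and> preserves R V g"
  unfolding Aut_def by blast

lemma comp_in_H: "x \<in> HH N \<Longrightarrow> y ` A m \<subseteq> A N \<Longrightarrow> inj_on y (A m) \<Longrightarrow> preserves R (A m) y
   \<Longrightarrow> restrict (x \<circ> y) (A m) \<in> HH m"
proof -
  assume x: "x \<in> HH N" and y: "y ` A m \<subseteq> A N" "inj_on y (A m)" "preserves R (A m) y"
  have xi: "x ` A N \<subseteq> V" "inj_on x (A N)" "preserves R (A N) x" using x unfolding H_iff by auto
  have "(restrict (x \<circ> y) (A m)) ` A m = x ` y ` A m" by auto
  also have "\<dots> \<subseteq> V" using xi y by auto
  finally have 1: "(restrict (x \<circ> y) (A m)) ` A m \<subseteq> V" .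
  have "inj_on (x \<circ> y) (A m)" using y xi by (intro comp_inj_on) (auto intro: inj_on_subset)
  then have 2: "inj_on (restrict (x \<circ> y) (A m)) (A m)" by (simp add: inj_on_def)
  have "preserves R (A m) (x \<circ> y)" using preserves_comp[OF y(3) xi(3) y(1)] .
  then have 3: "preserves R (A m) (restrict (x \<circ> y) (A m))" by (rule preserves_cong) auto
  show ?thesis unfolding H_iff using 1 2 3 by auto
qed

lemma H_inj_on: "y \<in> HH m \<Longrightarrow> inj_on y (A m)" unfolding H_iff by auto
lemma H_preserves: "y \<in> HH m \<Longrightarrow> preserves R (A m) y" unfolding H_iff by auto
lemma H_extensional: "y \<in> HH m \<Longrightarrow> y \<in> extensional (A m)" unfolding H_iff by auto
lemma H_image_subset_V: "y \<in> HH m \<Longrightarrow> y ` A m \<subseteq> V" unfolding H_iff by auto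

lemma Aut_bij: "g \<in> GG \<Longrightarrow> bij_betw g V V" unfolding Aut_iff by blast
lemma Aut_inj_on: "B \<subseteq> V \<Longrightarrow> g \<in> GG \<Longrightarrow> inj_on g B"
  by (rule inj_on_subset[OF bij_betw_imp_inj_on[OF Aut_bij]])
lemma Aut_preserves_A: "g \<in> GG \<Longrightarrow> preserves R (A m) g"
proof -
  assume "g \<in> GG" then have "preserves R V g" unfolding Aut_iff by blast
  then show ?thesis by (rule preserves_subset) (rule A_subset_V)
qed
lemma Aut_image_subset_V: "B \<subseteq> V \<Longrightarrow> g \<in> GG \<Longrightarrow> g ` B \<subseteq> V"
  using bij_betw_imp_surj_on[OF Aut_bij] by blast

lemma comp_H_in_H:
  assumes "x \<in> HH N" "y \<in> HH m" "y ` A m \<subseteq> A N"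
  shows "restrict (x \<circ> y) (A m) \<in> HH m"
  by (rule comp_in_H[OF assms(1,3) H_inj_on[OF assms(2)] H_preserves[OF assms(2)]])

lemma restrict_in_H: "x \<in> HH n \<Longrightarrow> m \<le> n \<Longrightarrow> restrict x (A m) \<in> HH m"
proof -
  assume "x \<in> HH n" "m \<le> n"
  then have "restrict (x \<circ> id) (A m) \<in> HH m"
    using comp_in_H[of x n id m] A_mono[of m n] preserves_id[of R "A m"] by simp
  then show ?thesis by simp
qed

lemma Aut_restrict_in_H: "g \<in> GG \<Longrightarrow> restrict g (A n) \<in> HH n"
proof -
  assume g: "g \<in> GG"
  have "restrict g (A n) ` A n \<subseteq> V" using Aut_image_subset_V[OF A_subset_V g] by auto
  moreover have "inj_on (restrict g (A n)) (A n)" using Aut_inj_on[OF A_subset_V g] by (simp add: inj_on_def)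
  moreover have "preserves R (A n) (restrict g (A n))" using Aut_preserves_A[OF g] by (rule preserves_cong) auto
  ultimately show ?thesis unfolding H_iff by auto
qed

definition id_Aut where "id_Aut = restrict id V"

lemma id_Aut_in_Aut: "id_Aut \<in> GG"
proof -
  have "bij_betw id_Aut V V" unfolding id_Aut_def by (rule bij_betw_imageI) (auto simp: inj_on_def)
  moreover have "preserves R V id_Aut" unfolding id_Aut_def by (rule preserves_cong[OF preserves_id]) auto
  ultimately show ?thesis unfolding Aut_iff id_Aut_def by auto
qed

lemma id_Aut_comp: "y \<in> HH n \<Longrightarrow> restrict (id_Aut \<circ> y) (A n) = y"
proof -
  assume y: "y \<in> HH n"
  have "restrict (id_Aut \<circ> y) (A n) = restrict y (A n)"
    using H_image_subset_V[OF y] unfolding id_Aut_def by (intro restrict_ext) auto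
  also have "\<dots> = y" using H_extensional[OF y] by (rule extensional_restrict)
  finally show ?thesis .
qed

lemma H_extends_to_Aut: "x \<in> HH n \<Longrightarrow> \<exists>g\<in>GG. restrict g (A n) = x"
proof -
  assume x: "x \<in> HH n"
  have "bij_betw x (A n) (x ` A n)" using H_inj_on[OF x] by (rule bij_betw_imageI) simp
  have u: "\<forall>A B f. finite A \<and> A \<subseteq> V \<and> B \<subseteq> V \<and> bij_betw f A B \<and> preserves R A f
        \<longrightarrow> (\<exists>g\<in>Aut V R. \<forall>x\<in>A. g x = f x)" using homogeneous unfolding ultrahomogeneous_def .
  have "finite (A n) \<and> A n \<subseteq> V \<and> x ` A n \<subseteq> V \<and> bij_betw x (A n) (x ` A n) \<and> preserves R (A n) x"
    using H_image_subset_V[OF x] H_preserves[OF x] finite_A A_subset_V \<open>bij_betw x (A n) (x ` A n)\<close> by blast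
  then obtain g where g: "g \<in> GG" "\<forall>a\<in>A n. g a = x a"
    using u[rule_format, of "A n" "x ` A n" x] by blast
  have "restrict g (A n) = restrict x (A n)" using g by (intro restrict_ext) auto
  also have "\<dots> = x" using H_extensional[OF x] by (rule extensional_restrict)
  finally show ?thesis using g by blast
qed

lemma H_image_in_some_A: "y \<in> HH m \<Longrightarrow> \<exists>N. y ` A m \<subseteq> A N"
  using finite_subset_some_A[of "y ` A m"] finite_A H_image_subset_V by blast

lemma Aut_image_in_some_A: "g \<in> GG \<Longrightarrow> \<exists>N. g ` A m \<subseteq> A N"
  using finite_subset_some_A[of "g ` A m"] finite_A Aut_image_subset_V[OF A_subset_V] by blast

lemma restrict_restrict_A: "m \<le> n \<Longrightarrow> restrict (restrict f (A n)) (A m) = restrict f (A m)"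
  using A_mono by (simp add: Int_absorb1)

section \<open>The Ellis semigroup \<open>S(G)\<close>\<close>

lemma SG_ultrafilter: "\<alpha> \<in> SS \<Longrightarrow> ultrafilter_on (HH n) (\<alpha> n)"
  unfolding SG_def by blast

lemma SG_coherent: "\<alpha> \<in> SS \<Longrightarrow> m \<le> n \<Longrightarrow> X \<in> \<alpha> m \<longleftrightarrow> X \<subseteq> HH m \<and> lift n m X \<in> \<alpha> n"
proof -
  assume a: "\<alpha> \<in> SS" and mn: "m \<le> n"
  then have "\<alpha> m = push (HH n) (HH m) (\<lambda>x. restrict x (A m)) (\<alpha> n)" unfolding SG_def by blast
  then show ?thesis unfolding push_def iup_def by auto
qed

lemma SG_subset_H: "\<alpha> \<in> SS \<Longrightarrow> X \<in> \<alpha> n \<Longrightarrow> X \<subseteq> HH n"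
  using SG_ultrafilter ultrafilter_on_subset by blast

lemma SGI: "(\<And>n. ultrafilter_on (HH n) (\<alpha> n)) \<Longrightarrow>
   (\<And>m n X. m \<le> n \<Longrightarrow> X \<subseteq> HH m \<Longrightarrow> X \<in> \<alpha> m \<longleftrightarrow> lift n m X \<in> \<alpha> n) \<Longrightarrow> \<alpha> \<in> SS"
proof -
  assume u: "\<And>n. ultrafilter_on (HH n) (\<alpha> n)"
    and c: "\<And>m n X. m \<le> n \<Longrightarrow> X \<subseteq> HH m \<Longrightarrow> X \<in> \<alpha> m \<longleftrightarrow> lift n m X \<in> \<alpha> n"
  have "\<alpha> m = push (HH n) (HH m) (\<lambda>x. restrict x (A m)) (\<alpha> n)" if "m \<le> n" for m n
  proof
    show "\<alpha> m \<subseteq> push (HH n) (HH m) (\<lambda>x. restrict x (A m)) (\<alpha> n)"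
      using c[OF that] ultrafilter_on_subset[OF u] unfolding push_def iup_def by blast
    show "push (HH n) (HH m) (\<lambda>x. restrict x (A m)) (\<alpha> n) \<subseteq> \<alpha> m"
      using c[OF that] unfolding push_def iup_def by blast
  qed
  then show ?thesis unfolding SG_def using u by blast
qed

lemma lift_subset: "lift n m X \<subseteq> HH n" unfolding iup_def by auto

lemma restrict_in_lift_iff:
  "g \<in> GG \<Longrightarrow> n \<le> N \<Longrightarrow> restrict g (A N) \<in> lift N n X \<longleftrightarrow> restrict g (A n) \<in> X"
  using Aut_restrict_in_H[of g N] A_mono[of n N] unfolding iup_def by (simp add: Int_absorb1)

lemma lift_iff: "s \<in> lift n m X \<longleftrightarrow> s \<in> HH n \<and> restrict s (A m) \<in> X" unfolding iup_def by auto

definition pull where "pull m T y N = {x \<in> HH N. restrict (x \<circ> y) (A m) \<in> T}"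

lemma pull_iff: "x \<in> pull m T y N \<longleftrightarrow> x \<in> HH N \<and> restrict (x \<circ> y) (A m) \<in> T"
  unfolding pull_def by simp
lemma pull_subset: "pull m T y N \<subseteq> HH N" unfolding pull_def by auto

lemma pull_lift:
  assumes y: "y ` A m \<subseteq> A N" and NN: "N \<le> N'"
  shows "pull m T y N' = lift N' N (pull m T y N)"
proof (intro set_eqI iffI)
  fix x assume "x \<in> pull m T y N'"
  then have x: "x \<in> HH N'" "restrict (x \<circ> y) (A m) \<in> T" by (simp_all add: pull_iff)
  have "restrict x (A N) \<in> HH N" by (rule restrict_in_H[OF x(1) NN])
  moreover have "restrict (restrict x (A N) \<circ> y) (A m) = restrict (x \<circ> y) (A m)" by (rule restrict_comp_restrict[OF y])
  ultimately show "x \<in> lift N' N (pull m T y N)" using x by (simp add: lift_iff pull_iff)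
next
  fix x assume "x \<in> lift N' N (pull m T y N)"
  then have x: "x \<in> HH N'" "restrict (restrict x (A N) \<circ> y) (A m) \<in> T" by (simp_all add: lift_iff pull_iff)
  have "restrict (restrict x (A N) \<circ> y) (A m) = restrict (x \<circ> y) (A m)" by (rule restrict_comp_restrict[OF y])
  then show "x \<in> pull m T y N'" using x by (simp add: pull_iff)
qed

lemma pull_level_mono: "p \<in> SS \<Longrightarrow> y ` A m \<subseteq> A N \<Longrightarrow> N \<le> N' \<Longrightarrow> pull m T y N \<in> p N \<longleftrightarrow> pull m T y N' \<in> p N'"
  using SG_coherent[of p N N' "pull m T y N"] pull_subset[of m T y N] pull_lift[of y m N N' T] by simp

lemma pull_level_indep: "p \<in> SS \<Longrightarrow> y ` A m \<subseteq> A N \<Longrightarrow> y ` A m \<subseteq> A N' \<Longrightarrow> pull m T y N \<in> p N \<longleftrightarrow> pull m T y N' \<in> p N'"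
  using pull_level_mono[of p y m N "max N N'" T] pull_level_mono[of p y m N' "max N N'" T] by simp

lemma pull_Int: "pull m (T \<inter> T') y N = pull m T y N \<inter> pull m T' y N" unfolding pull_def by auto
lemma pull_mono: "T \<subseteq> T' \<Longrightarrow> pull m T y N \<subseteq> pull m T' y N" unfolding pull_def by auto
lemma pull_Diff:
  assumes "y \<in> HH m" "y ` A m \<subseteq> A N"
  shows "pull m (HH m - T) y N = HH N - pull m T y N"
proof (intro set_eqI)
  fix x show "x \<in> pull m (HH m - T) y N \<longleftrightarrow> x \<in> HH N - pull m T y N"
  proof (cases "x \<in> HH N")
    case True
    have "restrict (x \<circ> y) (A m) \<in> HH m" by (rule comp_H_in_H[OF True assms])
    then show ?thesis using True by (simp add: pull_iff)
  qed (simp add: pull_iff)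
qed
lemma pull_H:
  assumes "y \<in> HH m" "y ` A m \<subseteq> A N"
  shows "pull m (HH m) y N = HH N"
proof (intro set_eqI)
  fix x show "x \<in> pull m (HH m) y N \<longleftrightarrow> x \<in> HH N"
  proof (cases "x \<in> HH N")
    case True
    have "restrict (x \<circ> y) (A m) \<in> HH m" by (rule comp_H_in_H[OF True assms])
    then show ?thesis using True by (simp add: pull_iff)
  qed (simp add: pull_iff)
qed
lemma pull_empty: "pull m {} y N = {}" unfolding pull_def by auto
lemma pull_restrict: "pull m T (restrict g (A m)) N = pull m T g N" unfolding pull_def by (simp add: restrict_comp_restrict')

text \<open>\<open>act2_sg m T p\<close> is \<open>T\<cdot>p\<close>, the extension to \<open>p \<in> S(G)\<close> of the right action \<open>act2\<close> of \<open>G\<close> on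
  subsets of \<open>H\<^sub>m\<close>: \<open>y \<in> T\<cdot>p\<close> iff \<open>{x. x \<circ> y \<in> T} \<in> p\<close>, evaluated at any level \<open>N\<close> containing the
  range of \<open>y\<close>. The product \<open>sg_mult p \<alpha>\<close> of the Ellis semigroup \<open>S(G)\<close> is then given by
  \<open>T \<in> p\<cdot>\<alpha>\<close> iff \<open>T\<cdot>p \<in> \<alpha>\<close>; \<open>sg_point g\<close> is the principal ultrafilter of \<open>g \<in> G\<close>.\<close>
definition act2_sg where "act2_sg m T p = {y \<in> HH m. \<exists>N. y ` A m \<subseteq> A N \<and> pull m T y N \<in> p N}"

lemma act2_sg_iff:
  assumes p: "p \<in> SS" and N: "y ` A m \<subseteq> A N"
  shows "y \<in> act2_sg m T p \<longleftrightarrow> y \<in> HH m \<and> pull m T y N \<in> p N"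
proof
  assume "y \<in> act2_sg m T p"
  then obtain N' where "y \<in> HH m" "y ` A m \<subseteq> A N'" "pull m T y N' \<in> p N'" unfolding act2_sg_def by blast
  then show "y \<in> HH m \<and> pull m T y N \<in> p N" using pull_level_indep[OF p N, of N' T] by blast
next
  assume "y \<in> HH m \<and> pull m T y N \<in> p N" then show "y \<in> act2_sg m T p" unfolding act2_sg_def using N by blast
qed

lemma act2_sg_subset: "act2_sg m T p \<subseteq> HH m" unfolding act2_sg_def by auto

lemma H_set_eqI:
  assumes "\<And>y N. y \<in> HH m \<Longrightarrow> y ` A m \<subseteq> A N \<Longrightarrow> y \<in> X \<longleftrightarrow> y \<in> Y" "X \<subseteq> HH m" "Y \<subseteq> HH m"
  shows "X = Y"
proof (intro set_eqI)
  fix y show "y \<in> X \<longleftrightarrow> y \<in> Y"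
  proof (cases "y \<in> HH m")
    case True
    then obtain N where "y ` A m \<subseteq> A N" using H_image_in_some_A by blast
    then show ?thesis using assms(1) True by blast
  next
    case False then show ?thesis using assms(2,3) by blast
  qed
qed

lemma act2_sg_Int:
  assumes p: "p \<in> SS"
  shows "act2_sg m (T \<inter> T') p = act2_sg m T p \<inter> act2_sg m T' p"
proof (rule H_set_eqI)
  fix y N assume y: "y \<in> HH m" and N: "y ` A m \<subseteq> A N"
  have "pull m T y N \<inter> pull m T' y N \<in> p N \<longleftrightarrow> pull m T y N \<in> p N \<and> pull m T' y N \<in> p N"
    using ultrafilter_on_Int_iff[OF SG_ultrafilter[OF p] pull_subset pull_subset] .
  then show "y \<in> act2_sg m (T \<inter> T') p \<longleftrightarrow> y \<in> act2_sg m T p \<inter> act2_sg m T' p"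
    using act2_sg_iff[OF p N] y pull_Int by simp
qed (use act2_sg_subset in auto)

lemma act2_sg_Diff:
  assumes p: "p \<in> SS"
  shows "act2_sg m (HH m - T) p = HH m - act2_sg m T p"
proof (rule H_set_eqI)
  fix y N assume y: "y \<in> HH m" and N: "y ` A m \<subseteq> A N"
  have "HH N - pull m T y N \<in> p N \<longleftrightarrow> pull m T y N \<notin> p N"
    using ultrafilter_on_Diff_iff[OF SG_ultrafilter[OF p] pull_subset] .
  then show "y \<in> act2_sg m (HH m - T) p \<longleftrightarrow> y \<in> HH m - act2_sg m T p"
    using act2_sg_iff[OF p N] y pull_Diff[OF y N] by simp
qed (use act2_sg_subset in auto)

lemma act2_sg_H:
  assumes p: "p \<in> SS"
  shows "act2_sg m (HH m) p = HH m"
proof (rule H_set_eqI)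
  fix y N assume y: "y \<in> HH m" and N: "y ` A m \<subseteq> A N"
  show "y \<in> act2_sg m (HH m) p \<longleftrightarrow> y \<in> HH m"
    using act2_sg_iff[OF p N] y pull_H[OF y N] ultrafilter_on_top[OF SG_ultrafilter[OF p]] by simp
qed (use act2_sg_subset in auto)

lemma act2_sg_empty:
  assumes p: "p \<in> SS"
  shows "act2_sg m {} p = {}"
proof (rule H_set_eqI)
  fix y N assume y: "y \<in> HH m" and N: "y ` A m \<subseteq> A N"
  show "y \<in> act2_sg m {} p \<longleftrightarrow> y \<in> {}"
    using act2_sg_iff[OF p N] y pull_empty ultrafilter_on_empty[OF SG_ultrafilter[OF p]] by simp
qed (use act2_sg_subset in auto)

lemma act2_sg_mono:
  assumes p: "p \<in> SS" and TT: "T \<subseteq> T'"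
  shows "act2_sg m T p \<subseteq> act2_sg m T' p"
proof
  fix y assume y: "y \<in> act2_sg m T p"
  then have yh: "y \<in> HH m" using act2_sg_subset by blast
  then obtain N where N: "y ` A m \<subseteq> A N" using H_image_in_some_A by blast
  have "pull m T y N \<in> p N" using y act2_sg_iff[OF p N] by simp
  then have "pull m T' y N \<in> p N" using ultrafilter_on_mono[OF SG_ultrafilter[OF p] _ pull_mono[OF TT] pull_subset] by blast
  then show "y \<in> act2_sg m T' p" using act2_sg_iff[OF p N] yh by simp
qed

lemma act2_sg_lift:
  assumes p: "p \<in> SS" and mn: "m \<le> n"
  shows "act2_sg n (lift n m T) p = lift n m (act2_sg m T p)"
proof (rule H_set_eqI)
  fix y N assume y: "y \<in> HH n" and N: "y ` A n \<subseteq> A N"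
  define y' where "y' = restrict y (A m)"
  have y'h: "y' \<in> HH m" unfolding y'_def by (rule restrict_in_H[OF y mn])
  have y'N: "y' ` A m \<subseteq> A N" unfolding y'_def using N A_mono[OF mn] by auto
  have "pull n (lift n m T) y N = pull m T y' N"
  proof (intro set_eqI)
    fix x show "x \<in> pull n (lift n m T) y N \<longleftrightarrow> x \<in> pull m T y' N"
    proof (cases "x \<in> HH N")
      case True
      have "restrict (x \<circ> y) (A n) \<in> HH n" by (rule comp_H_in_H[OF True y N])
      moreover have "restrict (restrict (x \<circ> y) (A n)) (A m) = restrict (x \<circ> y) (A m)" by (rule restrict_restrict_A[OF mn])
      moreover have "restrict (x \<circ> y') (A m) = restrict (x \<circ> y) (A m)" unfolding y'_def by (rule restrict_comp_restrict')
      ultimately show ?thesis using True by (simp add: pull_iff lift_iff)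
    next
      case False then show ?thesis by (simp add: pull_iff)
    qed
  qed
  then show "y \<in> act2_sg n (lift n m T) p \<longleftrightarrow> y \<in> lift n m (act2_sg m T p)"
    using act2_sg_iff[OF p N] act2_sg_iff[OF p y'N] y y'h unfolding lift_iff y'_def by simp
qed (use act2_sg_subset lift_subset in auto)

definition sg_mult where "sg_mult p \<alpha> = (\<lambda>n. {T. T \<subseteq> HH n \<and> act2_sg n T p \<in> \<alpha> n})"

lemma sg_mult_iff: "T \<in> sg_mult p \<alpha> n \<longleftrightarrow> T \<subseteq> HH n \<and> act2_sg n T p \<in> \<alpha> n"
  unfolding sg_mult_def by simp

lemma sg_mult_ultrafilter:
  assumes p: "p \<in> SS" and a: "\<alpha> \<in> SS"
  shows "ultrafilter_on (HH n) (sg_mult p \<alpha> n)"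
proof -
  have u: "ultrafilter_on (HH n) (\<alpha> n)" by (rule SG_ultrafilter[OF a])
  show ?thesis unfolding ultrafilter_on_def
  proof (intro conjI ballI allI impI)
    show "sg_mult p \<alpha> n \<subseteq> Pow (HH n)" by (auto simp: sg_mult_iff)
    show "HH n \<in> sg_mult p \<alpha> n" using act2_sg_H[OF p] ultrafilter_on_top[OF u] by (simp add: sg_mult_iff)
    show "{} \<notin> sg_mult p \<alpha> n" using act2_sg_empty[OF p] ultrafilter_on_empty[OF u] by (simp add: sg_mult_iff)
  next
    fix Y Z assume "Y \<in> sg_mult p \<alpha> n" "Z \<in> sg_mult p \<alpha> n"
    then show "Y \<inter> Z \<in> sg_mult p \<alpha> n" using act2_sg_Int[OF p] ultrafilter_on_Int[OF u] by (auto simp: sg_mult_iff)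
  next
    fix Y Z assume Y: "Y \<in> sg_mult p \<alpha> n" and YZ: "Y \<subseteq> Z \<and> Z \<subseteq> HH n"
    then have "act2_sg n Y p \<in> \<alpha> n" by (simp add: sg_mult_iff)
    then have "act2_sg n Z p \<in> \<alpha> n" using ultrafilter_on_mono[OF u _ act2_sg_mono[OF p] act2_sg_subset] YZ by blast
    then show "Z \<in> sg_mult p \<alpha> n" using YZ by (simp add: sg_mult_iff)
  next
    fix Y assume Y: "Y \<subseteq> HH n"
    have "act2_sg n Y p \<in> \<alpha> n \<or> HH n - act2_sg n Y p \<in> \<alpha> n" using ultrafilter_on_Diff_iff[OF u act2_sg_subset] by blast
    then show "Y \<in> sg_mult p \<alpha> n \<or> HH n - Y \<in> sg_mult p \<alpha> n" using Y act2_sg_Diff[OF p] by (auto simp: sg_mult_iff)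
  qed
qed

lemma sg_mult_in_SG:
  assumes p: "p \<in> SS" and a: "\<alpha> \<in> SS"
  shows "sg_mult p \<alpha> \<in> SS"
proof (rule SGI)
  show "ultrafilter_on (HH n) (sg_mult p \<alpha> n)" for n by (rule sg_mult_ultrafilter[OF p a])
next
  fix m n X assume mn: "m \<le> n" and X: "X \<subseteq> HH m"
  have "X \<in> sg_mult p \<alpha> m \<longleftrightarrow> act2_sg m X p \<in> \<alpha> m" using X by (simp add: sg_mult_iff)
  also have "\<dots> \<longleftrightarrow> lift n m (act2_sg m X p) \<in> \<alpha> n" using SG_coherent[OF a mn] act2_sg_subset by blast
  also have "\<dots> \<longleftrightarrow> act2_sg n (lift n m X) p \<in> \<alpha> n" using act2_sg_lift[OF p mn] by simp
  also have "\<dots> \<longleftrightarrow> lift n m X \<in> sg_mult p \<alpha> n" using lift_subset by (simp add: sg_mult_iff)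
  finally show "X \<in> sg_mult p \<alpha> m \<longleftrightarrow> lift n m X \<in> sg_mult p \<alpha> n" .
qed

definition sg_point where "sg_point g = (\<lambda>n. {T. T \<subseteq> HH n \<and> restrict g (A n) \<in> T})"

lemma sg_point_iff: "T \<in> sg_point g n \<longleftrightarrow> T \<subseteq> HH n \<and> restrict g (A n) \<in> T" unfolding sg_point_def by simp

lemma sg_point_in_SG:
  assumes g: "g \<in> GG"
  shows "sg_point g \<in> SS"
proof (rule SGI)
  show "ultrafilter_on (HH n) (sg_point g n)" for n unfolding sg_point_def by (rule ultrafilter_on_principal[OF Aut_restrict_in_H[OF g]])
next
  fix m n X assume mn: "m \<le> n" and X: "X \<subseteq> HH m"
  have "restrict (restrict g (A n)) (A m) = restrict g (A m)" by (rule restrict_restrict_A[OF mn])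
  then have "restrict g (A n) \<in> lift n m X \<longleftrightarrow> restrict g (A m) \<in> X" using Aut_restrict_in_H[OF g] by (simp add: lift_iff)
  then show "X \<in> sg_point g m \<longleftrightarrow> lift n m X \<in> sg_point g n"
    using X lift_subset by (simp add: sg_point_iff)
qed

lemma sg_mult_point_iff:
  assumes p: "p \<in> SS" and g: "g \<in> GG" and N: "g ` A n \<subseteq> A N"
  shows "T \<in> sg_mult p (sg_point g) n \<longleftrightarrow> T \<subseteq> HH n \<and> pull n T g N \<in> p N"
proof -
  have N': "restrict g (A n) ` A n \<subseteq> A N" using N by auto
  have "T \<in> sg_mult p (sg_point g) n \<longleftrightarrow> T \<subseteq> HH n \<and> restrict g (A n) \<in> act2_sg n T p"
    using act2_sg_subset by (auto simp: sg_mult_iff sg_point_iff)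
  also have "\<dots> \<longleftrightarrow> T \<subseteq> HH n \<and> pull n T g N \<in> p N"
    using act2_sg_iff[OF p N'] Aut_restrict_in_H[OF g] pull_restrict by simp
  finally show ?thesis .
qed

lemma act_eq_sg_mult:
  assumes a: "\<alpha> \<in> SS" and g: "g \<in> GG"
  shows "act V R A \<alpha> g = sg_mult \<alpha> (sg_point g)"
proof
  fix m
  define n0 where "n0 = (LEAST n. g ` A m \<subseteq> A n)"
  have N: "g ` A m \<subseteq> A n0" unfolding n0_def by (rule LeastI_ex) (rule Aut_image_in_some_A[OF g])
  have "act V R A \<alpha> g m = {T. T \<subseteq> HH m \<and> pull m T g n0 \<in> \<alpha> n0}"
    unfolding act_def push_def pull_def Let_def n0_def by simp
  also have "\<dots> = sg_mult \<alpha> (sg_point g) m" using sg_mult_point_iff[OF a g N] by blast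
  finally show "act V R A \<alpha> g m = sg_mult \<alpha> (sg_point g) m" .
qed

lemma pull_act2_sg:
  assumes p: "p \<in> SS" and yN: "y ` A m \<subseteq> A N" and yh: "\<And>x. x \<in> HH N \<Longrightarrow> restrict (x \<circ> y) (A m) \<in> HH m"
  shows "pull m (act2_sg m T p) y N = act2_sg N (pull m T y N) p"
proof (rule H_set_eqI)
  fix x L assume x: "x \<in> HH N" and L: "x ` A N \<subseteq> A L"
  define y' where "y' = restrict (x \<circ> y) (A m)"
  have y'h: "y' \<in> HH m" unfolding y'_def by (rule yh[OF x])
  have y'L: "y' ` A m \<subseteq> A L" unfolding y'_def using yN L by auto
  have "pull m T y' L = pull N (pull m T y N) x L"
  proof (intro set_eqI)
    fix z show "z \<in> pull m T y' L \<longleftrightarrow> z \<in> pull N (pull m T y N) x L"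
    proof (cases "z \<in> HH L")
      case True
      have "restrict (z \<circ> x) (A N) \<in> HH N" by (rule comp_H_in_H[OF True x L])
      moreover have "restrict (restrict (z \<circ> x) (A N) \<circ> y) (A m) = restrict (z \<circ> x \<circ> y) (A m)"
        by (rule restrict_comp_restrict[OF yN])
      moreover have "restrict (z \<circ> y') (A m) = restrict (z \<circ> x \<circ> y) (A m)"
        unfolding y'_def by (simp add: restrict_comp_restrict' o_assoc)
      ultimately show ?thesis using True by (simp add: pull_iff)
    next
      case False then show ?thesis by (simp add: pull_iff)
    qed
  qed
  then show "x \<in> pull m (act2_sg m T p) y N \<longleftrightarrow> x \<in> act2_sg N (pull m T y N) p"
    using act2_sg_iff[OF p y'L] act2_sg_iff[OF p L] x y'h unfolding pull_iff y'_def by simp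
qed (use pull_subset act2_sg_subset in auto)

lemma act2_sg_mult:
  assumes p: "p \<in> SS" and q: "q \<in> SS"
  shows "act2_sg m T (sg_mult p q) = act2_sg m (act2_sg m T p) q"
proof (rule H_set_eqI)
  fix y N assume y: "y \<in> HH m" and N: "y ` A m \<subseteq> A N"
  have "pull m (act2_sg m T p) y N = act2_sg N (pull m T y N) p"
    using pull_act2_sg[OF p N] comp_H_in_H[OF _ y N] by blast
  then show "y \<in> act2_sg m T (sg_mult p q) \<longleftrightarrow> y \<in> act2_sg m (act2_sg m T p) q"
    using act2_sg_iff[OF sg_mult_in_SG[OF p q] N] act2_sg_iff[OF q N] y pull_subset by (simp add: sg_mult_iff)
qed (use act2_sg_subset in auto)

lemma sg_mult_assoc:
  assumes p: "p \<in> SS" and q: "q \<in> SS" and a: "\<alpha> \<in> SS"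
  shows "sg_mult p (sg_mult q \<alpha>) = sg_mult (sg_mult p q) \<alpha>"
proof
  fix n show "sg_mult p (sg_mult q \<alpha>) n = sg_mult (sg_mult p q) \<alpha> n"
    using act2_sg_mult[OF p q] act2_sg_subset by (auto simp: sg_mult_iff)
qed

lemma act_SG: "\<alpha> \<in> SS \<Longrightarrow> g \<in> GG \<Longrightarrow> act V R A \<alpha> g \<in> SS"
  using act_eq_sg_mult sg_mult_in_SG sg_point_in_SG by simp

lemma sg_mult_act:
  assumes p: "p \<in> SS" and a: "\<alpha> \<in> SS" and g: "g \<in> GG"
  shows "sg_mult p (act V R A \<alpha> g) = act V R A (sg_mult p \<alpha>) g"
  using act_eq_sg_mult[OF a g] act_eq_sg_mult[OF sg_mult_in_SG[OF p a] g] sg_mult_assoc[OF p a sg_point_in_SG[OF g]] by simp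

lemma act2_sg_point:
  assumes g: "g \<in> GG"
  shows "act2_sg n T (sg_point g) = act2 V R A n T g"
proof (rule H_set_eqI)
  fix y N assume y: "y \<in> HH n" and N: "y ` A n \<subseteq> A N"
  have "restrict (restrict g (A N) \<circ> y) (A n) = restrict (g \<circ> y) (A n)" by (rule restrict_comp_restrict[OF N])
  then show "y \<in> act2_sg n T (sg_point g) \<longleftrightarrow> y \<in> act2 V R A n T g"
    using act2_sg_iff[OF sg_point_in_SG[OF g] N] y pull_subset Aut_restrict_in_H[OF g] unfolding act2_def
    by (simp add: sg_point_iff pull_iff)
qed (use act2_sg_subset in \<open>auto simp: act2_def\<close>)

lemma act2_act2_sg:
  assumes q: "q \<in> SS" and g: "g \<in> GG"
  shows "act2 V R A n (act2_sg n T q) g = act2_sg n T (act V R A q g)"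
  using act_eq_sg_mult[OF q g] act2_sg_mult[OF q sg_point_in_SG[OF g]] act2_sg_point[OF g] by simp

lemma act2_sg_point_id: "act2_sg n T (sg_point id_Aut) = T \<inter> HH n"
  using act2_sg_point[OF id_Aut_in_Aut] id_Aut_comp unfolding act2_def by auto

lemma act_point_id:
  assumes g: "g \<in> GG"
  shows "act V R A (sg_point id_Aut) g = sg_point g"
proof
  fix n show "act V R A (sg_point id_Aut) g n = sg_point g n"
    using act_eq_sg_mult[OF sg_point_in_SG[OF id_Aut_in_Aut] g] act2_sg_point_id Aut_restrict_in_H[OF g] by (auto simp: sg_mult_iff sg_point_iff)
qed

section \<open>Topology of \<open>S(G)\<close>\<close>

abbreviation basic where "basic n X \<equiv> sg_basic V R A n X"
abbreviation sg_closed_set where "sg_closed_set C \<equiv> sg_closed V R A C"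
abbreviation sg_cont where "sg_cont \<phi> \<equiv> sg_continuous V R A \<phi>"

lemma basic_iff: "\<alpha> \<in> basic n X \<longleftrightarrow> \<alpha> \<in> SS \<and> X \<in> \<alpha> n" unfolding sg_basic_def by simp

lemma basic_open: "sg_open V R A (basic n X)"
  unfolding sg_open_def
proof (intro conjI ballI)
  show "basic n X \<subseteq> SS" by (auto simp: basic_iff)
  fix \<alpha> assume "\<alpha> \<in> basic n X"
  then have "X \<in> \<alpha> n" by (simp add: basic_iff)
  then show "\<exists>n' X'. X' \<in> \<alpha> n' \<and> basic n' X' \<subseteq> basic n X" by blast
qed

lemma sg_closedI:
  assumes "C \<subseteq> SS" "\<And>\<alpha>. \<alpha> \<in> SS \<Longrightarrow> \<alpha> \<notin> C \<Longrightarrow> \<exists>n X. X \<in> \<alpha> n \<and> (\<forall>\<beta>\<in>SS. X \<in> \<beta> n \<longrightarrow> \<beta> \<notin> C)"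
  shows "sg_closed_set C"
  unfolding sg_closed_def sg_open_def
proof (intro conjI ballI)
  show "C \<subseteq> SS" by fact
  show "SS - C \<subseteq> SS" by auto
  fix \<alpha> assume a: "\<alpha> \<in> SS - C"
  then obtain n X where "X \<in> \<alpha> n" "\<forall>\<beta>\<in>SS. X \<in> \<beta> n \<longrightarrow> \<beta> \<notin> C" using assms(2) by blast
  moreover have "basic n X \<subseteq> SS - C"
  proof
    fix \<beta> assume "\<beta> \<in> basic n X"
    then have "\<beta> \<in> SS" "X \<in> \<beta> n" by (auto simp: basic_iff)
    then show "\<beta> \<in> SS - C" using \<open>\<forall>\<beta>\<in>SS. X \<in> \<beta> n \<longrightarrow> \<beta> \<notin> C\<close> by blast
  qed
  ultimately show "\<exists>n X. X \<in> \<alpha> n \<and> basic n X \<subseteq> SS - C" by blast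
qed

lemma sg_closedD:
  assumes "sg_closed_set C" "\<alpha> \<in> SS" "\<alpha> \<notin> C"
  shows "\<exists>n X. X \<in> \<alpha> n \<and> (\<forall>\<beta>\<in>C. X \<notin> \<beta> n)"
proof -
  have "sg_open V R A (SS - C)" "C \<subseteq> SS" using assms(1) unfolding sg_closed_def by auto
  then obtain n X where "X \<in> \<alpha> n" "basic n X \<subseteq> SS - C" using assms(2,3) unfolding sg_open_def by blast
  moreover have "\<forall>\<beta>\<in>C. X \<notin> \<beta> n"
  proof (intro ballI notI)
    fix \<beta> assume "\<beta> \<in> C" "X \<in> \<beta> n"
    then have "\<beta> \<in> basic n X" using \<open>C \<subseteq> SS\<close> by (auto simp: basic_iff)
    then show False using \<open>basic n X \<subseteq> SS - C\<close> \<open>\<beta> \<in> C\<close> by blast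
  qed
  ultimately show ?thesis by blast
qed

lemma sg_closed_subset: "sg_closed_set C \<Longrightarrow> C \<subseteq> SS" unfolding sg_closed_def by auto

lemma SG_neq_witness:
  assumes a: "\<alpha> \<in> SS" and b: "\<beta> \<in> SS" and ne: "\<alpha> \<noteq> \<beta>"
  shows "\<exists>n X. X \<in> \<alpha> n \<and> X \<notin> \<beta> n"
proof -
  have "\<exists>n. \<alpha> n \<noteq> \<beta> n" using ne by (simp add: fun_eq_iff)
  then obtain n where "\<alpha> n \<noteq> \<beta> n" by blast
  then have "\<not> \<alpha> n \<subseteq> \<beta> n" using ultrafilter_on_eqI[OF SG_ultrafilter[OF a] SG_ultrafilter[OF b]] by auto
  then show ?thesis by auto
qed

lemma SG_lift_Int_iff:
  assumes \<beta>: "\<beta> \<in> SS" and N: "n1 \<le> N" "n2 \<le> N" and X: "X1 \<subseteq> HH n1" "X2 \<subseteq> HH n2"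
  shows "lift N n1 X1 \<inter> lift N n2 X2 \<in> \<beta> N \<longleftrightarrow> X1 \<in> \<beta> n1 \<and> X2 \<in> \<beta> n2"
  using ultrafilter_on_Int_iff[OF SG_ultrafilter[OF \<beta>] lift_subset lift_subset]
    SG_coherent[OF \<beta> N(1)] SG_coherent[OF \<beta> N(2)] X by simp

lemma basic_Int:
  assumes a: "\<alpha> \<in> SS" and X1: "X1 \<in> \<alpha> n1" and X2: "X2 \<in> \<alpha> n2"
  shows "\<exists>N X. X \<in> \<alpha> N \<and> (\<forall>\<beta>\<in>SS. X \<in> \<beta> N \<longrightarrow> X1 \<in> \<beta> n1 \<and> X2 \<in> \<beta> n2)"
proof -
  have N: "n1 \<le> max n1 n2" "n2 \<le> max n1 n2" by auto
  have X: "X1 \<subseteq> HH n1" "X2 \<subseteq> HH n2" using SG_subset_H[OF a] X1 X2 by auto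
  show ?thesis
    using SG_lift_Int_iff[OF a N X] SG_lift_Int_iff[OF _ N X] X1 X2 by blast
qed

lemma sg_point_dense:
  assumes a: "\<alpha> \<in> SS" and Y: "Y \<in> \<alpha> k"
  shows "\<exists>g\<in>GG. Y \<in> sg_point g k"
proof -
  obtain y where y: "y \<in> Y" using ultrafilter_on_nonempty[OF SG_ultrafilter[OF a] Y] by auto
  have Ys: "Y \<subseteq> HH k" using SG_subset_H[OF a Y] .
  obtain g where "g \<in> GG" "restrict g (A k) = y" using H_extends_to_Aut y Ys by blast
  then show ?thesis using y Ys by (auto simp: sg_point_iff)
qed

definition image_ultrafilter where
  "image_ultrafilter Z f W = (\<lambda>n. push Z (HH n) (\<lambda>z. restrict (f z) (A n)) W)"

lemma image_ultrafilter_iff: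
  "X \<in> image_ultrafilter Z f W n \<longleftrightarrow> X \<subseteq> HH n \<and> {z \<in> Z. restrict (f z) (A n) \<in> X} \<in> W"
  unfolding image_ultrafilter_def push_def by simp

lemma image_ultrafilter_in_SG:
  assumes W: "ultrafilter_on Z W" and f: "\<And>z. z \<in> Z \<Longrightarrow> f z \<in> GG"
  shows "image_ultrafilter Z f W \<in> SS"
proof (rule SGI)
  show "ultrafilter_on (HH n) (image_ultrafilter Z f W n)" for n
    unfolding image_ultrafilter_def by (rule ultrafilter_on_push[OF W Aut_restrict_in_H[OF f]])
next
  fix m n X assume mn: "m \<le> n" and X: "X \<subseteq> HH m"
  have "{z \<in> Z. restrict (f z) (A n) \<in> lift n m X} = {z \<in> Z. restrict (f z) (A m) \<in> X}"
    using restrict_in_lift_iff[OF f mn] by blast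
  then show "X \<in> image_ultrafilter Z f W m \<longleftrightarrow> lift n m X \<in> image_ultrafilter Z f W n"
    using X lift_subset by (simp add: image_ultrafilter_iff)
qed

lemma SG_cylinder_ultrafilter_exists:
  assumes ne: "\<C> \<noteq> {}" and closed: "\<And>C. C \<in> \<C> \<Longrightarrow> sg_closed_set C"
    and nonempty: "\<And>C. C \<in> \<C> \<Longrightarrow> C \<noteq> {}"
    and directed: "\<And>C1 C2. C1 \<in> \<C> \<Longrightarrow> C2 \<in> \<C> \<Longrightarrow> \<exists>C3\<in>\<C>. C3 \<subseteq> C1 \<inter> C2"
  shows "\<exists>W. ultrafilter_on GG W
    \<and> (\<forall>C\<in>\<C>. \<forall>n X. X \<subseteq> HH n \<and> (\<forall>\<beta>\<in>C. X \<in> \<beta> n) \<longrightarrow> {g \<in> GG. restrict g (A n) \<in> X} \<in> W)"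
proof -
  have CS: "\<And>C. C \<in> \<C> \<Longrightarrow> C \<subseteq> SS" using closed sg_closed_subset by blast
  define cyl where "cyl n X = {g \<in> GG. restrict g (A n) \<in> X}" for n X
  define I where "I = {(n, X). X \<subseteq> HH n \<and> (\<exists>C\<in>\<C>. \<forall>\<beta>\<in>C. X \<in> \<beta> n)}"
  have cyl_base: "cyl n X \<in> case_prod cyl ` I" if "(n, X) \<in> I" for n X
    using that by force
  have "\<exists>W. ultrafilter_on GG W \<and> case_prod cyl ` I \<subseteq> W"
  proof (rule ultrafilter_on_exists)
    show "case_prod cyl ` I \<subseteq> Pow GG" unfolding cyl_def by blast
    obtain C0 where C0: "C0 \<in> \<C>" using ne by blast
    have "\<forall>\<beta>\<in>C0. HH 0 \<in> \<beta> 0" using CS[OF C0] ultrafilter_on_top[OF SG_ultrafilter] by blast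
    then have "(0, HH 0) \<in> I" using C0 unfolding I_def by blast
    then show "case_prod cyl ` I \<noteq> {}" by blast
    show "{} \<notin> case_prod cyl ` I"
    proof
      assume "{} \<in> case_prod cyl ` I"
      then obtain n X where "(n, X) \<in> I" and empty: "cyl n X = {}" by auto
      then obtain C where C: "C \<in> \<C>" "\<forall>\<beta>\<in>C. X \<in> \<beta> n" unfolding I_def by blast
      obtain \<beta> where "\<beta> \<in> C" using nonempty[OF C(1)] by blast
      then obtain g where "g \<in> GG" "X \<in> sg_point g n" using sg_point_dense CS[OF C(1)] C(2) by blast
      then show False using empty unfolding cyl_def by (auto simp: sg_point_iff)
    qed
  next
    fix a b assume "a \<in> case_prod cyl ` I" "b \<in> case_prod cyl ` I"
    then obtain n1 X1 n2 X2 where a: "a = cyl n1 X1" "(n1, X1) \<in> I" and b: "b = cyl n2 X2" "(n2, X2) \<in> I"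
      by auto
    then obtain C1 C2 where X: "X1 \<subseteq> HH n1" "X2 \<subseteq> HH n2" and C: "C1 \<in> \<C>" "C2 \<in> \<C>"
      and C1: "\<forall>\<beta>\<in>C1. X1 \<in> \<beta> n1" and C2: "\<forall>\<beta>\<in>C2. X2 \<in> \<beta> n2"
      unfolding I_def by blast
    obtain C3 where C3: "C3 \<in> \<C>" "C3 \<subseteq> C1 \<inter> C2" using directed[OF C] by blast
    define N where "N = max n1 n2"
    define X where "X = lift N n1 X1 \<inter> lift N n2 X2"
    have N: "n1 \<le> N" "n2 \<le> N" unfolding N_def by auto
    have "X \<in> \<beta> N" if "\<beta> \<in> C3" for \<beta>
    proof -
      have "\<beta> \<in> SS" "X1 \<in> \<beta> n1" "X2 \<in> \<beta> n2" using that C3 C1 C2 CS[OF C3(1)] by blast+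
      then show ?thesis using SG_lift_Int_iff[OF _ N X] unfolding X_def by blast
    qed
    then have "(N, X) \<in> I" using C3(1) lift_subset unfolding I_def X_def by blast
    moreover have "cyl N X \<subseteq> a \<inter> b"
      unfolding a(1) b(1) cyl_def X_def by (auto simp: restrict_in_lift_iff[OF _ N(1)] restrict_in_lift_iff[OF _ N(2)])
    ultimately show "\<exists>c\<in>case_prod cyl ` I. c \<subseteq> a \<inter> b" using cyl_base by blast
  qed
  then obtain W where W: "ultrafilter_on GG W" "case_prod cyl ` I \<subseteq> W" by blast
  show ?thesis
  proof (intro exI conjI ballI allI impI)
    fix C n X assume "C \<in> \<C>" "X \<subseteq> HH n \<and> (\<forall>\<beta>\<in>C. X \<in> \<beta> n)"
    then have "(n, X) \<in> I" unfolding I_def by blast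
    then have "cyl n X \<in> W" using W(2) cyl_base by blast
    then show "{g \<in> GG. restrict g (A n) \<in> X} \<in> W" unfolding cyl_def .
  qed (rule W(1))
qed

text \<open>The common point is the image in \<open>S(G)\<close> of the ultrafilter on \<open>G\<close> just constructed.\<close>
lemma sg_compact:
  assumes ne: "\<C> \<noteq> {}" and closed: "\<And>C. C \<in> \<C> \<Longrightarrow> sg_closed_set C"
    and nonempty: "\<And>C. C \<in> \<C> \<Longrightarrow> C \<noteq> {}"
    and directed: "\<And>C1 C2. C1 \<in> \<C> \<Longrightarrow> C2 \<in> \<C> \<Longrightarrow> \<exists>C3\<in>\<C>. C3 \<subseteq> C1 \<inter> C2"
  shows "\<exists>\<alpha>. \<forall>C\<in>\<C>. \<alpha> \<in> C"
proof -
  obtain W where W: "ultrafilter_on GG W" and cyl: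
    "\<forall>C\<in>\<C>. \<forall>n X. X \<subseteq> HH n \<and> (\<forall>\<beta>\<in>C. X \<in> \<beta> n) \<longrightarrow> {g \<in> GG. restrict g (A n) \<in> X} \<in> W"
    using SG_cylinder_ultrafilter_exists[OF assms] by blast
  define \<alpha> where "\<alpha> = image_ultrafilter GG (\<lambda>g. g) W"
  have \<alpha>: "\<alpha> \<in> SS" unfolding \<alpha>_def by (rule image_ultrafilter_in_SG[OF W])
  have "\<alpha> \<in> C" if C: "C \<in> \<C>" for C
  proof (rule ccontr)
    assume "\<alpha> \<notin> C"
    then obtain n X where X: "X \<in> \<alpha> n" "\<forall>\<beta>\<in>C. X \<notin> \<beta> n" using sg_closedD[OF closed[OF C] \<alpha>] by blast
    have Xs: "X \<subseteq> HH n" using SG_subset_H[OF \<alpha> X(1)] .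
    have "HH n - X \<in> \<beta> n" if "\<beta> \<in> C" for \<beta>
    proof -
      have "\<beta> \<in> SS" using that sg_closed_subset[OF closed[OF C]] by blast
      then show ?thesis using ultrafilter_on_Diff_iff[OF SG_ultrafilter Xs] X(2) that by blast
    qed
    then have "{g \<in> GG. restrict g (A n) \<in> HH n - X} \<in> W"
      using cyl[rule_format, OF C, where n=n and X="HH n - X"] by blast
    moreover have "{g \<in> GG. restrict g (A n) \<in> X} \<in> W" using X(1) unfolding \<alpha>_def by (simp add: image_ultrafilter_iff)
    ultimately have "{g \<in> GG. restrict g (A n) \<in> HH n - X} \<inter> {g \<in> GG. restrict g (A n) \<in> X} \<in> W"
      by (rule ultrafilter_on_Int[OF W])
    moreover have "{g \<in> GG. restrict g (A n) \<in> HH n - X} \<inter> {g \<in> GG. restrict g (A n) \<in> X} = {}" by blast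
    ultimately show False using ultrafilter_on_empty[OF W] by simp
  qed
  then show ?thesis by blast
qed

lemma sg_cont_mult:
  assumes p: "p \<in> SS"
  shows "sg_cont (sg_mult p)"
  unfolding sg_continuous_def
proof (intro allI impI)
  fix U assume U: "sg_open V R A U"
  show "sg_open V R A {\<alpha> \<in> SS. sg_mult p \<alpha> \<in> U}" unfolding sg_open_def
  proof (intro conjI ballI)
    show "{\<alpha> \<in> SS. sg_mult p \<alpha> \<in> U} \<subseteq> SS" by auto
    fix \<alpha> assume a: "\<alpha> \<in> {\<alpha> \<in> SS. sg_mult p \<alpha> \<in> U}"
    then obtain n X where X: "X \<in> sg_mult p \<alpha> n" "basic n X \<subseteq> U" using U unfolding sg_open_def by blast
    have "act2_sg n X p \<in> \<alpha> n" "X \<subseteq> HH n" using X(1) by (auto simp: sg_mult_iff)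
    moreover have "basic n (act2_sg n X p) \<subseteq> {\<alpha> \<in> SS. sg_mult p \<alpha> \<in> U}"
    proof
      fix \<beta> assume "\<beta> \<in> basic n (act2_sg n X p)"
      then have "\<beta> \<in> SS" "X \<in> sg_mult p \<beta> n" using \<open>X \<subseteq> HH n\<close> by (auto simp: basic_iff sg_mult_iff)
      then show "\<beta> \<in> {\<alpha> \<in> SS. sg_mult p \<alpha> \<in> U}" using X(2) sg_mult_in_SG[OF p] by (auto simp: basic_iff)
    qed
    ultimately show "\<exists>n X. X \<in> \<alpha> n \<and> basic n X \<subseteq> {\<alpha> \<in> SS. sg_mult p \<alpha> \<in> U}" by blast
  qed
qed

lemma sg_cont_basic:
  assumes c: "sg_cont \<phi>" and m: "\<forall>\<alpha>\<in>SS. \<phi> \<alpha> \<in> SS" and a: "\<alpha> \<in> SS" and X: "X \<in> \<phi> \<alpha> n"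
  shows "\<exists>k Y. Y \<in> \<alpha> k \<and> (\<forall>\<beta>\<in>SS. Y \<in> \<beta> k \<longrightarrow> X \<in> \<phi> \<beta> n)"
proof -
  have "sg_open V R A {\<beta> \<in> SS. \<phi> \<beta> \<in> basic n X}" using c basic_open unfolding sg_continuous_def by blast
  moreover have "\<alpha> \<in> {\<beta> \<in> SS. \<phi> \<beta> \<in> basic n X}" using a X m by (auto simp: basic_iff)
  ultimately obtain k Y where kY: "Y \<in> \<alpha> k" "basic k Y \<subseteq> {\<beta> \<in> SS. \<phi> \<beta> \<in> basic n X}" unfolding sg_open_def by blast
  have "\<forall>\<beta>\<in>SS. Y \<in> \<beta> k \<longrightarrow> X \<in> \<phi> \<beta> n"
  proof (intro ballI impI)
    fix \<beta> assume "\<beta> \<in> SS" "Y \<in> \<beta> k"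
    then have "\<beta> \<in> basic k Y" by (simp add: basic_iff)
    then show "X \<in> \<phi> \<beta> n" using kY(2) by (auto simp: basic_iff)
  qed
  then show ?thesis using kY(1) by blast
qed

lemma sg_cont_eq_on_points:
  assumes c1: "sg_cont \<phi>" and c2: "sg_cont \<psi>" and m1: "\<forall>\<alpha>\<in>SS. \<phi> \<alpha> \<in> SS" and m2: "\<forall>\<alpha>\<in>SS. \<psi> \<alpha> \<in> SS"
    and eq: "\<And>g. g \<in> GG \<Longrightarrow> \<phi> (sg_point g) = \<psi> (sg_point g)" and a: "\<alpha> \<in> SS"
  shows "\<phi> \<alpha> = \<psi> \<alpha>"
proof (rule ccontr)
  assume "\<phi> \<alpha> \<noteq> \<psi> \<alpha>"
  then obtain n X where X: "X \<in> \<phi> \<alpha> n" "X \<notin> \<psi> \<alpha> n" using SG_neq_witness m1 m2 a by blast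
  have Xs: "X \<subseteq> HH n" using SG_subset_H X(1) m1 a by blast
  have pa: "\<psi> \<alpha> \<in> SS" using m2 a by blast
  have X2: "HH n - X \<in> \<psi> \<alpha> n" using ultrafilter_on_Diff_iff[OF SG_ultrafilter[OF pa] Xs] X(2) by blast
  obtain k1 Y1 where Y1: "Y1 \<in> \<alpha> k1" "\<forall>\<beta>\<in>SS. Y1 \<in> \<beta> k1 \<longrightarrow> X \<in> \<phi> \<beta> n" using sg_cont_basic[OF c1 m1 a X(1)] by blast
  obtain k2 Y2 where Y2: "Y2 \<in> \<alpha> k2" "\<forall>\<beta>\<in>SS. Y2 \<in> \<beta> k2 \<longrightarrow> HH n - X \<in> \<psi> \<beta> n" using sg_cont_basic[OF c2 m2 a X2] by blast
  obtain N Y where Y: "Y \<in> \<alpha> N" "\<forall>\<beta>\<in>SS. Y \<in> \<beta> N \<longrightarrow> Y1 \<in> \<beta> k1 \<and> Y2 \<in> \<beta> k2"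
    using basic_Int[OF a Y1(1) Y2(1)] by blast
  obtain g where g: "g \<in> GG" "Y \<in> sg_point g N" using sg_point_dense[OF a Y(1)] by blast
  have pg: "sg_point g \<in> SS" by (rule sg_point_in_SG[OF g(1)])
  have "X \<in> \<phi> (sg_point g) n" "HH n - X \<in> \<psi> (sg_point g) n" using Y(2) Y1(2) Y2(2) pg g(2) by auto
  then have "X \<in> \<phi> (sg_point g) n" "HH n - X \<in> \<phi> (sg_point g) n" using eq[OF g(1)] by auto
  moreover have "\<phi> (sg_point g) \<in> SS" using m1 pg by blast
  ultimately show False using ultrafilter_on_Diff_iff[OF SG_ultrafilter Xs] by blast
qed

lemma retraction_eq_sg_mult:
  assumes r: "retraction V R A M \<phi>" and MS: "M \<subseteq> SS" and a: "\<alpha> \<in> SS"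
  shows "\<phi> \<alpha> = sg_mult (\<phi> (sg_point id_Aut)) \<alpha>"
proof -
  have e: "sg_point id_Aut \<in> SS" by (rule sg_point_in_SG[OF id_Aut_in_Aut])
  have rM: "\<forall>\<alpha>\<in>SS. \<phi> \<alpha> \<in> M" and rc: "sg_cont \<phi>"
    and req: "\<forall>\<alpha>\<in>SS. \<forall>g\<in>GG. \<phi> (act V R A \<alpha> g) = act V R A (\<phi> \<alpha>) g"
    using r unfolding retraction_def by auto
  have p: "\<phi> (sg_point id_Aut) \<in> SS" using rM e MS by blast
  show ?thesis
  proof (rule sg_cont_eq_on_points[OF rc sg_cont_mult[OF p] _ _ _ a])
    show "\<forall>\<alpha>\<in>SS. \<phi> \<alpha> \<in> SS" using rM MS by blast
    show "\<forall>\<alpha>\<in>SS. sg_mult (\<phi> (sg_point id_Aut)) \<alpha> \<in> SS" using sg_mult_in_SG[OF p] by blast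
  next
    fix g assume g: "g \<in> GG"
    have "\<phi> (sg_point g) = \<phi> (act V R A (sg_point id_Aut) g)" using act_point_id[OF g] by simp
    also have "\<dots> = act V R A (\<phi> (sg_point id_Aut)) g" using req e g by blast
    also have "\<dots> = sg_mult (\<phi> (sg_point id_Aut)) (sg_point g)" by (rule act_eq_sg_mult[OF p g])
    finally show "\<phi> (sg_point g) = sg_mult (\<phi> (sg_point id_Aut)) (sg_point g)" .
  qed
qed

lemma basic_closed:
  assumes Xs: "X \<subseteq> HH n"
  shows "sg_closed_set (basic n X)"
proof (rule sg_closedI)
  show "basic n X \<subseteq> SS" by (auto simp: basic_iff)
  fix \<alpha> assume a: "\<alpha> \<in> SS" "\<alpha> \<notin> basic n X"
  then have "X \<notin> \<alpha> n" by (simp add: basic_iff)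
  then have "HH n - X \<in> \<alpha> n" using ultrafilter_on_Diff_iff[OF SG_ultrafilter[OF a(1)] Xs] by blast
  moreover have "\<forall>\<beta>\<in>SS. HH n - X \<in> \<beta> n \<longrightarrow> \<beta> \<notin> basic n X"
  proof (intro ballI impI)
    fix \<beta> assume "\<beta> \<in> SS" "HH n - X \<in> \<beta> n"
    then have "X \<notin> \<beta> n" using ultrafilter_on_Diff_iff[OF SG_ultrafilter[OF \<open>\<beta> \<in> SS\<close>] Xs] by blast
    then show "\<beta> \<notin> basic n X" by (simp add: basic_iff)
  qed
  ultimately show "\<exists>n' X'. X' \<in> \<alpha> n' \<and> (\<forall>\<beta>\<in>SS. X' \<in> \<beta> n' \<longrightarrow> \<beta> \<notin> basic n X)" by blast
qed

lemma sg_closed_Int: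
  assumes c1: "sg_closed_set C1" and c2: "sg_closed_set C2"
  shows "sg_closed_set (C1 \<inter> C2)"
proof (rule sg_closedI)
  show "C1 \<inter> C2 \<subseteq> SS" using sg_closed_subset[OF c1] by blast
  fix \<alpha> assume a: "\<alpha> \<in> SS" "\<alpha> \<notin> C1 \<inter> C2"
  show "\<exists>n X. X \<in> \<alpha> n \<and> (\<forall>\<beta>\<in>SS. X \<in> \<beta> n \<longrightarrow> \<beta> \<notin> C1 \<inter> C2)"
  proof (cases "\<alpha> \<in> C1")
    case False
    then obtain n X where "X \<in> \<alpha> n" "\<forall>\<beta>\<in>C1. X \<notin> \<beta> n" using sg_closedD[OF c1 a(1)] by blast
    then show ?thesis by blast
  next
    case True
    then have "\<alpha> \<notin> C2" using a by blast
    then obtain n X where "X \<in> \<alpha> n" "\<forall>\<beta>\<in>C2. X \<notin> \<beta> n" using sg_closedD[OF c2 a(1)] by blast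
    then show ?thesis by blast
  qed
qed

lemma sg_closed_Inter:
  assumes ne: "\<C> \<noteq> {}" and c: "\<And>C. C \<in> \<C> \<Longrightarrow> sg_closed_set C"
  shows "sg_closed_set (\<Inter>\<C>)"
proof (rule sg_closedI)
  obtain C0 where "C0 \<in> \<C>" using ne by auto
  then show "\<Inter>\<C> \<subseteq> SS" using sg_closed_subset[OF c] by blast
  fix \<alpha> assume a: "\<alpha> \<in> SS" "\<alpha> \<notin> \<Inter>\<C>"
  then obtain C where C: "C \<in> \<C>" "\<alpha> \<notin> C" by blast
  then obtain n X where "X \<in> \<alpha> n" "\<forall>\<beta>\<in>C. X \<notin> \<beta> n" using sg_closedD[OF c[OF C(1)] a(1)] by blast
  then show "\<exists>n X. X \<in> \<alpha> n \<and> (\<forall>\<beta>\<in>SS. X \<in> \<beta> n \<longrightarrow> \<beta> \<notin> \<Inter>\<C>)" using C(1) by blast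
qed

lemma sg_closed_vimage:
  assumes c: "sg_cont \<phi>" and \<phi>: "\<And>\<alpha>. \<alpha> \<in> SS \<Longrightarrow> \<phi> \<alpha> \<in> SS" and C: "sg_closed_set C"
  shows "sg_closed_set {\<alpha> \<in> SS. \<phi> \<alpha> \<in> C}"
proof -
  have "sg_open V R A {\<alpha> \<in> SS. \<phi> \<alpha> \<in> SS - C}"
    using c C unfolding sg_continuous_def sg_closed_def by blast
  moreover have "SS - {\<alpha> \<in> SS. \<phi> \<alpha> \<in> C} = {\<alpha> \<in> SS. \<phi> \<alpha> \<in> SS - C}" using \<phi> by blast
  ultimately show ?thesis unfolding sg_closed_def by auto
qed

lemma sg_closed_singleton:
  assumes z: "z \<in> SS" shows "sg_closed_set {z}"
proof (rule sg_closedI)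
  fix \<alpha> assume \<alpha>: "\<alpha> \<in> SS" "\<alpha> \<notin> {z}"
  then obtain n X where X: "X \<in> \<alpha> n" "X \<notin> z n" using SG_neq_witness[OF \<alpha>(1) z] by blast
  then show "\<exists>n X. X \<in> \<alpha> n \<and> (\<forall>\<beta>\<in>SS. X \<in> \<beta> n \<longrightarrow> \<beta> \<notin> {z})" by blast
qed (use z in blast)

lemma sg_closed_sg_mult_eq:
  assumes x: "x \<in> SS" and z: "z \<in> SS" shows "sg_closed_set {y \<in> SS. sg_mult x y = z}"
  using sg_closed_vimage[OF sg_cont_mult[OF x] sg_mult_in_SG[OF x] sg_closed_singleton[OF z]] by simp

text \<open>If \<open>\<beta>\<close> is in the closure of \<open>\<phi> ` C\<close>, then by compactness the preimages in \<open>C\<close> of the basic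
  neighbourhoods of \<open>\<beta>\<close> have a common point \<open>y\<close>, and \<open>\<phi> y = \<beta>\<close>.\<close>
lemma sg_closed_image:
  assumes c: "sg_cont \<phi>" and \<phi>: "\<And>\<alpha>. \<alpha> \<in> SS \<Longrightarrow> \<phi> \<alpha> \<in> SS" and C: "sg_closed_set C"
  shows "sg_closed_set (\<phi> ` C)"
proof (rule sg_closedI)
  have CS: "C \<subseteq> SS" by (rule sg_closed_subset[OF C])
  then show "\<phi> ` C \<subseteq> SS" using \<phi> by blast
  fix \<beta> assume \<beta>: "\<beta> \<in> SS" "\<beta> \<notin> \<phi> ` C"
  show "\<exists>n X. X \<in> \<beta> n \<and> (\<forall>\<gamma>\<in>SS. X \<in> \<gamma> n \<longrightarrow> \<gamma> \<notin> \<phi> ` C)"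
  proof (rule ccontr)
    assume "\<not> ?thesis"
    then have meets: "\<exists>y\<in>C. X \<in> \<phi> y n" if "X \<in> \<beta> n" for n X using that by blast
    define nbhd where "nbhd n X = C \<inter> {\<alpha> \<in> SS. \<phi> \<alpha> \<in> basic n X}" for n X
    define \<C> where "\<C> = {nbhd n X | n X. X \<in> \<beta> n}"
    have "\<exists>y. \<forall>D\<in>\<C>. y \<in> D"
    proof (rule sg_compact)
      have "HH 0 \<in> \<beta> 0" using ultrafilter_on_top[OF SG_ultrafilter[OF \<beta>(1)]] .
      then show "\<C> \<noteq> {}" unfolding \<C>_def by blast
    next
      fix D assume "D \<in> \<C>"
      then obtain n X where D: "D = nbhd n X" "X \<in> \<beta> n" unfolding \<C>_def by blast
      show "sg_closed_set D" unfolding D(1) nbhd_def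
        by (rule sg_closed_Int[OF C sg_closed_vimage[OF c \<phi> basic_closed[OF SG_subset_H[OF \<beta>(1) D(2)]]]])
      show "D \<noteq> {}" using meets[OF D(2)] CS \<phi> unfolding D(1) nbhd_def by (auto simp: basic_iff)
    next
      fix D1 D2 assume "D1 \<in> \<C>" "D2 \<in> \<C>"
      then obtain n1 X1 n2 X2 where D: "D1 = nbhd n1 X1" "D2 = nbhd n2 X2" and X: "X1 \<in> \<beta> n1" "X2 \<in> \<beta> n2"
        unfolding \<C>_def by blast
      obtain N X where "X \<in> \<beta> N" "\<forall>\<gamma>\<in>SS. X \<in> \<gamma> N \<longrightarrow> X1 \<in> \<gamma> n1 \<and> X2 \<in> \<gamma> n2"
        using basic_Int[OF \<beta>(1) X] by blast
      then show "\<exists>D3\<in>\<C>. D3 \<subseteq> D1 \<inter> D2" unfolding \<C>_def D nbhd_def by (auto simp: basic_iff)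
    qed
    then obtain y where y: "\<forall>D\<in>\<C>. y \<in> D" by blast
    have y_nbhd: "y \<in> C \<and> X \<in> \<phi> y n" if "X \<in> \<beta> n" for n X
      using y that unfolding \<C>_def nbhd_def by (auto simp: basic_iff)
    have yC: "y \<in> C" using y_nbhd ultrafilter_on_top[OF SG_ultrafilter[OF \<beta>(1)]] by blast
    have "\<phi> y = \<beta>"
    proof (rule ccontr)
      assume "\<phi> y \<noteq> \<beta>"
      then obtain n X where "X \<in> \<beta> n" "X \<notin> \<phi> y n" using SG_neq_witness[OF \<beta>(1) \<phi>] yC CS by blast
      then show False using y_nbhd by blast
    qed
    then show False using \<beta>(2) yC by blast
  qed
qed

lemma sg_closed_act2_sg_agree:
  assumes F: "F \<subseteq> HH n"
  shows "sg_closed_set {q \<in> SS. act2_sg n T q \<inter> F = T' \<inter> F}"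
proof (rule sg_closedI)
  show "{q \<in> SS. act2_sg n T q \<inter> F = T' \<inter> F} \<subseteq> SS" by blast
  fix q assume q: "q \<in> SS" "q \<notin> {q \<in> SS. act2_sg n T q \<inter> F = T' \<inter> F}"
  then obtain y where y: "y \<in> F" "(y \<in> act2_sg n T q) \<noteq> (y \<in> T')" by blast
  have yh: "y \<in> HH n" using y F by blast
  obtain N where N: "y ` A n \<subseteq> A N" using H_image_in_some_A[OF yh] by blast
  show "\<exists>m X. X \<in> q m \<and> (\<forall>\<beta>\<in>SS. X \<in> \<beta> m \<longrightarrow> \<beta> \<notin> {q \<in> SS. act2_sg n T q \<inter> F = T' \<inter> F})"
  proof (cases "y \<in> act2_sg n T q")
    case True
    then have "pull n T y N \<in> q N" using act2_sg_iff[OF q(1) N] by simp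
    moreover have "\<forall>\<beta>\<in>SS. pull n T y N \<in> \<beta> N \<longrightarrow> \<beta> \<notin> {q \<in> SS. act2_sg n T q \<inter> F = T' \<inter> F}"
    proof (intro ballI impI)
      fix \<beta> assume b: "\<beta> \<in> SS" "pull n T y N \<in> \<beta> N"
      then have "y \<in> act2_sg n T \<beta>" using act2_sg_iff[OF b(1) N] yh by simp
      then show "\<beta> \<notin> {q \<in> SS. act2_sg n T q \<inter> F = T' \<inter> F}" using True y by blast
    qed
    ultimately show ?thesis by blast
  next
    case False
    then have "pull n T y N \<notin> q N" using act2_sg_iff[OF q(1) N] yh by simp
    then have "HH N - pull n T y N \<in> q N" using ultrafilter_on_Diff_iff[OF SG_ultrafilter[OF q(1)] pull_subset] by blast
    moreover have "\<forall>\<beta>\<in>SS. HH N - pull n T y N \<in> \<beta> N \<longrightarrow> \<beta> \<notin> {q \<in> SS. act2_sg n T q \<inter> F = T' \<inter> F}"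
    proof (intro ballI impI)
      fix \<beta> assume b: "\<beta> \<in> SS" "HH N - pull n T y N \<in> \<beta> N"
      then have "pull n T y N \<notin> \<beta> N" using ultrafilter_on_Diff_iff[OF SG_ultrafilter[OF b(1)] pull_subset] by blast
      then have "y \<notin> act2_sg n T \<beta>" using act2_sg_iff[OF b(1) N] by simp
      then show "\<beta> \<notin> {q \<in> SS. act2_sg n T q \<inter> F = T' \<inter> F}" using False y by blast
    qed
    ultimately show ?thesis by blast
  qed
qed

section \<open>Idempotents and retractions\<close>

definition closed_subsemigroup where
  "closed_subsemigroup P \<longleftrightarrow> P \<noteq> {} \<and> sg_closed_set P \<and> (\<forall>a\<in>P. \<forall>b\<in>P. sg_mult a b \<in> P)"

lemma closed_subsemigroupD:
  assumes "closed_subsemigroup P"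
  shows "P \<noteq> {}" "sg_closed_set P" "\<And>a b. a \<in> P \<Longrightarrow> b \<in> P \<Longrightarrow> sg_mult a b \<in> P"
  using assms unfolding closed_subsemigroup_def by blast+

lemma minimal_closed_subsemigroup_exists:
  assumes Q: "closed_subsemigroup Q"
  shows "\<exists>P\<subseteq>Q. closed_subsemigroup P \<and> (\<forall>P'. P' \<subseteq> P \<and> closed_subsemigroup P' \<longrightarrow> P' = P)"
proof -
  define \<Q> where "\<Q> = {P. P \<subseteq> Q \<and> closed_subsemigroup P}"
  have "\<exists>P\<in>\<Q>. \<forall>P'\<in>\<Q>. P' \<subseteq> P \<longrightarrow> P' = P"
  proof (rule Inter_Zorn_nonempty)
    show "\<Q> \<noteq> {}" using Q unfolding \<Q>_def by blast
  next
    fix \<P> assume ne: "\<P> \<noteq> {}" and ch: "subset.chain \<Q> \<P>"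
    have P: "P \<subseteq> Q" "closed_subsemigroup P" if "P \<in> \<P>" for P
      using ch that unfolding subset_chain_def \<Q>_def by blast+
    have tot: "P \<subseteq> P' \<or> P' \<subseteq> P" if "P \<in> \<P>" "P' \<in> \<P>" for P P'
      using ch that unfolding subset_chain_def by blast
    have closed: "\<And>P. P \<in> \<P> \<Longrightarrow> sg_closed_set P" using P(2) closed_subsemigroupD(2) by blast
    have "\<exists>\<alpha>. \<forall>P\<in>\<P>. \<alpha> \<in> P"
    proof (rule sg_compact[OF ne closed])
      show "P \<noteq> {}" if "P \<in> \<P>" for P using closed_subsemigroupD(1)[OF P(2)[OF that]] .
      show "\<exists>P3\<in>\<P>. P3 \<subseteq> P1 \<inter> P2" if "P1 \<in> \<P>" "P2 \<in> \<P>" for P1 P2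
      proof (cases "P1 \<subseteq> P2")
        case True then show ?thesis using that(1) by blast
      next
        case False then show ?thesis using tot[OF that] that(2) by blast
      qed
    qed
    then have "\<Inter>\<P> \<noteq> {}" by blast
    moreover have "sg_closed_set (\<Inter>\<P>)" by (rule sg_closed_Inter[OF ne closed])
    moreover have "sg_mult a b \<in> \<Inter>\<P>" if "a \<in> \<Inter>\<P>" "b \<in> \<Inter>\<P>" for a b
    proof
      fix P assume "P \<in> \<P>"
      then show "sg_mult a b \<in> P" using closed_subsemigroupD(3)[OF P(2)] that by blast
    qed
    moreover have "\<Inter>\<P> \<subseteq> Q" using ne P(1) by blast
    ultimately show "\<Inter>\<P> \<in> \<Q>" unfolding \<Q>_def closed_subsemigroup_def by blast
  qed
  then obtain P where "P \<in> \<Q>" and min: "\<forall>P'\<in>\<Q>. P' \<subseteq> P \<longrightarrow> P' = P" ..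
  then have P: "P \<subseteq> Q" "closed_subsemigroup P" unfolding \<Q>_def by simp_all
  have "P' = P" if "P' \<subseteq> P" "closed_subsemigroup P'" for P'
  proof -
    have "P' \<in> \<Q>" using that P(1) unfolding \<Q>_def by auto
    then show ?thesis using min that(1) by blast
  qed
  then show ?thesis using P by (intro exI[of _ P]) blast
qed

text \<open>Ellis-Numakura: for \<open>x\<close> in a minimal closed subsemigroup \<open>P\<close>, minimality forces first
  \<open>x P = P\<close> and then \<open>{y \<in> P. x y = x} = P\<close>, so \<open>x x = x\<close>.\<close>
lemma closed_subsemigroup_idempotent:
  assumes Q: "closed_subsemigroup Q"
  shows "\<exists>u\<in>Q. sg_mult u u = u"
proof -
  obtain P where PQ: "P \<subseteq> Q" and P: "closed_subsemigroup P"
    and min: "\<And>P'. P' \<subseteq> P \<Longrightarrow> closed_subsemigroup P' \<Longrightarrow> P' = P"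
    using minimal_closed_subsemigroup_exists[OF Q] by blast
  have closed: "sg_closed_set P" and mult: "\<And>a b. a \<in> P \<Longrightarrow> b \<in> P \<Longrightarrow> sg_mult a b \<in> P"
    using P unfolding closed_subsemigroup_def by blast+
  have PS: "P \<subseteq> SS" by (rule sg_closed_subset[OF closed])
  obtain x where x: "x \<in> P" using P unfolding closed_subsemigroup_def by blast
  have xS: "x \<in> SS" using x PS by blast
  have "closed_subsemigroup (sg_mult x ` P)"
    unfolding closed_subsemigroup_def
  proof (intro conjI ballI)
    show "sg_mult x ` P \<noteq> {}" using x by blast
    show "sg_closed_set (sg_mult x ` P)"
      by (rule sg_closed_image[OF sg_cont_mult[OF xS] sg_mult_in_SG[OF xS] closed])
    fix a b assume "a \<in> sg_mult x ` P" "b \<in> sg_mult x ` P"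
    then obtain a' b' where ab: "a' \<in> P" "b' \<in> P" "a = sg_mult x a'" "b = sg_mult x b'" by blast
    then have "sg_mult a b = sg_mult x (sg_mult a' (sg_mult x b'))"
      using sg_mult_assoc[OF xS, of a' "sg_mult x b'"] PS sg_mult_in_SG[OF xS] by (simp add: subset_iff)
    moreover have "sg_mult a' (sg_mult x b') \<in> P" using mult[OF ab(1) mult[OF x ab(2)]] .
    ultimately show "sg_mult a b \<in> sg_mult x ` P" by (rule image_eqI)
  qed
  moreover have "sg_mult x ` P \<subseteq> P" using mult x by blast
  ultimately have xP: "sg_mult x ` P = P" by (rule min[rotated])
  have "closed_subsemigroup {y \<in> P. sg_mult x y = x}"
    unfolding closed_subsemigroup_def
  proof (intro conjI ballI)
    obtain y where "y \<in> P" "x = sg_mult x y" using x xP by (metis imageE)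
    then show "{y \<in> P. sg_mult x y = x} \<noteq> {}" by auto
    have "{y \<in> P. sg_mult x y = x} = P \<inter> {y \<in> SS. sg_mult x y = x}" using PS by blast
    then show "sg_closed_set {y \<in> P. sg_mult x y = x}"
      using sg_closed_Int[OF closed sg_closed_sg_mult_eq[OF xS xS]] by simp
    fix a b assume "a \<in> {y \<in> P. sg_mult x y = x}" "b \<in> {y \<in> P. sg_mult x y = x}"
    then have ab: "a \<in> P" "b \<in> P" "sg_mult x a = x" "sg_mult x b = x" by auto
    then have "sg_mult x (sg_mult a b) = x" using sg_mult_assoc[OF xS, of a b] PS by (simp add: subset_iff)
    then show "sg_mult a b \<in> {y \<in> P. sg_mult x y = x}" using mult[OF ab(1,2)] by blast
  qed
  then have "{y \<in> P. sg_mult x y = x} = P" by (rule min[rotated]) blast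
  then have "sg_mult x x = x" using x by blast
  then show ?thesis using x PQ by blast
qed

lemma subflowD:
  assumes s: "subflow V R A M"
  shows "M \<noteq> {}" "sg_closed_set M" "M \<subseteq> SS" "\<And>\<alpha> g. \<alpha> \<in> M \<Longrightarrow> g \<in> GG \<Longrightarrow> act V R A \<alpha> g \<in> M"
proof -
  show "M \<noteq> {}" using s unfolding subflow_def by blast
  show c: "sg_closed_set M" using s unfolding subflow_def by blast
  show "M \<subseteq> SS" by (rule sg_closed_subset[OF c])
  show "\<And>\<alpha> g. \<alpha> \<in> M \<Longrightarrow> g \<in> GG \<Longrightarrow> act V R A \<alpha> g \<in> M" using s unfolding subflow_def by blast
qed

lemma sg_mult_in_subflow:
  assumes M: "subflow V R A M" and q: "q \<in> M" and a: "\<alpha> \<in> SS"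
  shows "sg_mult q \<alpha> \<in> M"
proof (rule ccontr)
  note c = subflowD(2)[OF M] and inv = subflowD(4)[OF M]
  assume nM: "sg_mult q \<alpha> \<notin> M"
  have qS: "q \<in> SS" using q sg_closed_subset[OF c] by blast
  obtain n X where X: "X \<in> sg_mult q \<alpha> n" "\<forall>\<beta>\<in>M. X \<notin> \<beta> n" using sg_closedD[OF c sg_mult_in_SG[OF qS a] nM] by blast
  have "act2_sg n X q \<in> \<alpha> n" "X \<subseteq> HH n" using X(1) by (auto simp: sg_mult_iff)
  then obtain g where g: "g \<in> GG" "act2_sg n X q \<in> sg_point g n" using sg_point_dense[OF a] by blast
  have "X \<in> sg_mult q (sg_point g) n" using g(2) \<open>X \<subseteq> HH n\<close> by (simp add: sg_mult_iff)
  then have "X \<in> act V R A q g n" using act_eq_sg_mult[OF qS g(1)] by simp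
  then show False using X(2) inv[OF q g(1)] by blast
qed

lemma sg_mult_image_minimal_subflow:
  assumes m: "minimal_subflow V R A M" and u: "u \<in> M"
  shows "sg_mult u ` M = M"
proof -
  have sf: "subflow V R A M" and mn: "\<And>N. N \<subseteq> M \<Longrightarrow> subflow V R A N \<Longrightarrow> N = M"
    using m unfolding minimal_subflow_def by blast+
  note d = subflowD[OF sf]
  have uS: "u \<in> SS" using u d(3) by blast
  have sub: "sg_mult u ` M \<subseteq> M"
  proof
    fix z assume "z \<in> sg_mult u ` M"
    then obtain q where "q \<in> M" "z = sg_mult u q" by blast
    moreover then have "q \<in> SS" using d(3) by blast
    ultimately show "z \<in> M" using sg_mult_in_subflow[OF sf u] by blast
  qed
  have "subflow V R A (sg_mult u ` M)" unfolding subflow_def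
  proof (intro conjI ballI)
    show "sg_mult u ` M \<noteq> {}" using d(1) by blast
    show "sg_closed_set (sg_mult u ` M)" by (rule sg_closed_image[OF sg_cont_mult[OF uS] sg_mult_in_SG[OF uS] d(2)])
    fix \<alpha> g assume "\<alpha> \<in> sg_mult u ` M" "g \<in> GG"
    then obtain q where q: "q \<in> M" "\<alpha> = sg_mult u q" by blast
    have qS: "q \<in> SS" using q d(3) by blast
    have "act V R A \<alpha> g = sg_mult u (act V R A q g)" using sg_mult_act[OF uS qS \<open>g \<in> GG\<close>] q(2) by simp
    then show "act V R A \<alpha> g \<in> sg_mult u ` M" using d(4)[OF q(1) \<open>g \<in> GG\<close>] by blast
  qed
  then show ?thesis using mn sub by blast
qed

lemma idempotent_retraction:
  assumes m: "minimal_subflow V R A M" and u: "u \<in> M" and id: "sg_mult u u = u"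
  shows "retraction V R A M (sg_mult u)"
proof -
  have sf: "subflow V R A M" using m unfolding minimal_subflow_def by blast
  note d = subflowD[OF sf]
  have uS: "u \<in> SS" using u d(3) by blast
  show ?thesis unfolding retraction_def
  proof (intro conjI ballI)
    fix \<alpha> assume "\<alpha> \<in> SS" then show "sg_mult u \<alpha> \<in> M" using sg_mult_in_subflow[OF sf u] by blast
  next
    show "sg_cont (sg_mult u)" by (rule sg_cont_mult[OF uS])
  next
    fix \<alpha> g assume "\<alpha> \<in> SS" "g \<in> GG" then show "sg_mult u (act V R A \<alpha> g) = act V R A (sg_mult u \<alpha>) g"
      by (rule sg_mult_act[OF uS])
  next
    fix \<alpha> assume a: "\<alpha> \<in> M"
    then obtain q where q: "q \<in> M" "\<alpha> = sg_mult u q" using sg_mult_image_minimal_subflow[OF m u] by blast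
    have qS: "q \<in> SS" using q d(3) by blast
    have "sg_mult u \<alpha> = sg_mult (sg_mult u u) q" using q sg_mult_assoc[OF uS uS qS] by simp
    then show "sg_mult u \<alpha> = \<alpha>" using id q by simp
  qed
qed

section \<open>Minimal subsets\<close>

abbreviation orbit_cl where "orbit_cl n S \<equiv> orbit_closure2 V R A n S"
abbreviation closed_H where "closed_H n Z \<equiv> closed2 V R A n Z"
abbreviation act2H where "act2H n S g \<equiv> act2 V R A n S g"

lemma minimal_subset_subset: "minimal_subset V R A n T \<Longrightarrow> T \<subseteq> HH n"
  unfolding minimal_subset_def by blast

lemma orbit_cl_iff: "T' \<in> orbit_cl n S \<longleftrightarrow> T' \<subseteq> HH n \<and> (\<forall>F. finite F \<and> F \<subseteq> HH n \<longrightarrow> (\<exists>g\<in>GG. act2H n S g \<inter> F = T' \<inter> F))"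
  unfolding orbit_closure2_def by simp

lemma finite_H_in_some_A:
  assumes "finite F" "F \<subseteq> HH n"
  shows "\<exists>N. \<forall>y\<in>F. y ` A n \<subseteq> A N"
proof -
  have "finite (\<Union>y\<in>F. y ` A n)" using assms(1) finite_A by blast
  moreover have "(\<Union>y\<in>F. y ` A n) \<subseteq> V" using assms(2) H_image_subset_V by blast
  ultimately obtain N where "(\<Union>y\<in>F. y ` A n) \<subseteq> A N" using finite_subset_some_A by blast
  then show ?thesis by blast
qed

lemma act2_iff: "y \<in> act2H n S g \<longleftrightarrow> y \<in> HH n \<and> restrict (g \<circ> y) (A n) \<in> S"
  unfolding act2_def by simp

text \<open>An element \<open>x\<close> of the finitely many sets of \<open>q\<close> that decide \<open>y \<in> S\<cdot>q\<close> for \<open>y \<in> F\<close> extends to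
  an automorphism \<open>g\<close>, and then \<open>S\<cdot>g\<close> agrees with \<open>S\<cdot>q\<close> on \<open>F\<close>.\<close>
lemma act2_sg_in_orbit_cl:
  assumes q: "q \<in> SS"
  shows "act2_sg n S q \<in> orbit_cl n S"
  unfolding orbit_cl_iff
proof (intro conjI allI impI)
  show "act2_sg n S q \<subseteq> HH n" by (rule act2_sg_subset)
  fix F assume F: "finite F \<and> F \<subseteq> HH n"
  obtain N where N: "\<forall>y\<in>F. y ` A n \<subseteq> A N" using finite_H_in_some_A F by blast
  define P where "P y = (if y \<in> act2_sg n S q then pull n S y N else HH N - pull n S y N)" for y
  have Pq: "P y \<in> q N" if "y \<in> F" for y
  proof (cases "y \<in> act2_sg n S q")
    have yN: "y ` A n \<subseteq> A N" using N that by blast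
    case True then show ?thesis unfolding P_def using act2_sg_iff[OF q yN] by simp
  next
    have yN: "y ` A n \<subseteq> A N" using N that by blast
    case False
    then have "pull n S y N \<notin> q N" using act2_sg_iff[OF q yN] that F by auto
    then show ?thesis unfolding P_def using False ultrafilter_on_Diff_iff[OF SG_ultrafilter[OF q] pull_subset] by simp
  qed
  have "HH N \<inter> (\<Inter>y\<in>F. P y) \<in> q N" using ultrafilter_on_INT[OF SG_ultrafilter[OF q]] F Pq by blast
  then obtain x where x: "x \<in> HH N \<inter> (\<Inter>y\<in>F. P y)" using ultrafilter_on_nonempty[OF SG_ultrafilter[OF q]] by blast
  obtain g where g: "g \<in> GG" "restrict g (A N) = x" using H_extends_to_Aut x by blast
  have "act2H n S g \<inter> F = act2_sg n S q \<inter> F"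
  proof (intro set_eqI iffI)
    fix y assume y: "y \<in> act2H n S g \<inter> F"
    then have yh: "y \<in> HH n" "restrict (g \<circ> y) (A n) \<in> S" "y \<in> F" by (auto simp: act2_iff)
    have "restrict (restrict g (A N) \<circ> y) (A n) = restrict (g \<circ> y) (A n)" by (rule restrict_comp_restrict) (use N yh in blast)
    then have "x \<in> pull n S y N" using yh x g(2) by (simp add: pull_iff)
    moreover have "x \<in> P y" using x yh by blast
    ultimately show "y \<in> act2_sg n S q \<inter> F" using yh unfolding P_def by (auto split: if_splits)
  next
    fix y assume y: "y \<in> act2_sg n S q \<inter> F"
    then have yh: "y \<in> HH n" "y \<in> F" "y \<in> act2_sg n S q" using act2_sg_subset by auto
    have "x \<in> P y" using x yh by blast
    then have "x \<in> pull n S y N" using yh unfolding P_def by simp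
    moreover have "restrict (restrict g (A N) \<circ> y) (A n) = restrict (g \<circ> y) (A n)" by (rule restrict_comp_restrict) (use N yh in blast)
    ultimately show "y \<in> act2H n S g \<inter> F" using yh g(2) by (simp add: pull_iff act2_iff)
  qed
  then show "\<exists>g\<in>GG. act2H n S g \<inter> F = act2_sg n S q \<inter> F" using g(1) by blast
qed

lemma act2_sg_limit:
  assumes C: "sg_closed_set C" and T': "T' \<subseteq> HH n"
    and approx: "\<And>F. finite F \<Longrightarrow> F \<subseteq> HH n \<Longrightarrow> \<exists>q\<in>C. act2_sg n T q \<inter> F = T' \<inter> F"
  shows "\<exists>q\<in>C. act2_sg n T q = T'"
proof -
  define agree where "agree F = C \<inter> {q \<in> SS. act2_sg n T q \<inter> F = T' \<inter> F}" for F
  define \<C> where "\<C> = {agree F | F. finite F \<and> F \<subseteq> HH n}"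
  have "\<exists>q. \<forall>D\<in>\<C>. q \<in> D"
  proof (rule sg_compact)
    show "\<C> \<noteq> {}" unfolding \<C>_def by blast
  next
    fix D assume "D \<in> \<C>"
    then obtain F where D: "D = agree F" and F: "finite F" "F \<subseteq> HH n" unfolding \<C>_def by blast
    show "sg_closed_set D" unfolding D agree_def by (rule sg_closed_Int[OF C sg_closed_act2_sg_agree[OF F(2)]])
    show "D \<noteq> {}" using approx[OF F] sg_closed_subset[OF C] unfolding D agree_def by blast
  next
    fix D1 D2 assume "D1 \<in> \<C>" "D2 \<in> \<C>"
    then obtain F1 F2 where D: "D1 = agree F1" "D2 = agree F2" and F: "finite (F1 \<union> F2)" "F1 \<union> F2 \<subseteq> HH n"
      unfolding \<C>_def by blast
    have "agree (F1 \<union> F2) \<in> \<C>" using F unfolding \<C>_def by blast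
    moreover have "agree (F1 \<union> F2) \<subseteq> D1 \<inter> D2" unfolding D agree_def by blast
    ultimately show "\<exists>D3\<in>\<C>. D3 \<subseteq> D1 \<inter> D2" by blast
  qed
  then obtain q where q0: "\<forall>D\<in>\<C>. q \<in> D" by blast
  have q: "q \<in> agree F" if "finite F" "F \<subseteq> HH n" for F
    using q0 that unfolding \<C>_def by blast
  have "q \<in> C" using q[of "{}"] unfolding agree_def by blast
  moreover have "act2_sg n T q = T'"
  proof (intro set_eqI)
    fix y show "y \<in> act2_sg n T q \<longleftrightarrow> y \<in> T'"
    proof (cases "y \<in> HH n")
      case True
      then have "act2_sg n T q \<inter> {y} = T' \<inter> {y}" using q[of "{y}"] unfolding agree_def by blast
      then show ?thesis by blast
    next
      case False then show ?thesis using T' act2_sg_subset by blast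
    qed
  qed
  ultimately show ?thesis by blast
qed

lemma SG_closed: "sg_closed_set SS"
  by (rule sg_closedI) blast+

lemma orbit_cl_act2_sg:
  assumes T': "T' \<in> orbit_cl n S" shows "\<exists>q\<in>SS. act2_sg n S q = T'"
proof (rule act2_sg_limit[OF SG_closed])
  show "T' \<subseteq> HH n" using T' orbit_cl_iff by blast
  fix F assume "finite F" "F \<subseteq> HH n"
  then obtain g where g: "g \<in> GG" "act2H n S g \<inter> F = T' \<inter> F" using T' unfolding orbit_cl_iff by blast
  show "\<exists>q\<in>SS. act2_sg n S q \<inter> F = T' \<inter> F"
    using g(2) act2_sg_point[OF g(1)] by (intro bexI[OF _ sg_point_in_SG[OF g(1)]]) simp
qed

lemma orbit_cl_self:
  assumes S: "S \<subseteq> HH n"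
  shows "S \<in> orbit_cl n S"
proof -
  have "act2H n S id_Aut = S" using id_Aut_comp S unfolding act2_def by auto
  then show ?thesis using S id_Aut_in_Aut unfolding orbit_cl_iff by metis
qed

lemma orbit_cl_closed: "closed_H n (orbit_cl n S)"
  unfolding closed2_def
proof (intro conjI allI impI)
  show "orbit_cl n S \<subseteq> Pow (HH n)" using orbit_cl_iff by blast
  fix T'' assume H: "T'' \<subseteq> HH n \<and> (\<forall>F. finite F \<and> F \<subseteq> HH n \<longrightarrow> (\<exists>T'\<in>orbit_cl n S. T' \<inter> F = T'' \<inter> F))"
  show "T'' \<in> orbit_cl n S" unfolding orbit_cl_iff
  proof (intro conjI allI impI)
    show "T'' \<subseteq> HH n" using H by blast
    fix F assume F: "finite F \<and> F \<subseteq> HH n"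
    then obtain T' where T': "T' \<in> orbit_cl n S" "T' \<inter> F = T'' \<inter> F" using H by blast
    then obtain g where "g \<in> GG" "act2H n S g \<inter> F = T' \<inter> F" using F unfolding orbit_cl_iff by blast
    then show "\<exists>g\<in>GG. act2H n S g \<inter> F = T'' \<inter> F" using T'(2) by metis
  qed
qed

lemma orbit_cl_invariant:
  assumes T': "T' \<in> orbit_cl n S" and g: "g \<in> GG"
  shows "act2H n T' g \<in> orbit_cl n S"
proof -
  obtain q where q: "q \<in> SS" "act2_sg n S q = T'" using orbit_cl_act2_sg[OF T'] by blast
  have "act2H n (act2_sg n S q) g = act2_sg n S (act V R A q g)" by (rule act2_act2_sg[OF q(1) g])
  then have "act2H n T' g = act2_sg n S (act V R A q g)" using q(2) by simp
  then show ?thesis using act2_sg_in_orbit_cl[OF act_SG[OF q(1) g]] by simp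
qed

lemma orbit_cl_subset:
  assumes Z: "closed_H n Z" and inv: "\<forall>T\<in>Z. \<forall>g\<in>GG. act2H n T g \<in> Z" and T: "T \<in> Z"
  shows "orbit_cl n T \<subseteq> Z"
proof
  fix T' assume T': "T' \<in> orbit_cl n T"
  have "T' \<subseteq> HH n \<and> (\<forall>F. finite F \<and> F \<subseteq> HH n \<longrightarrow> (\<exists>T0\<in>Z. T0 \<inter> F = T' \<inter> F))"
  proof (intro conjI allI impI)
    show "T' \<subseteq> HH n" using T' orbit_cl_iff by blast
    fix F assume "finite F \<and> F \<subseteq> HH n"
    then obtain g where "g \<in> GG" "act2H n T g \<inter> F = T' \<inter> F" using T' unfolding orbit_cl_iff by blast
    moreover then have "act2H n T g \<in> Z" using inv T by blast
    ultimately show "\<exists>T0\<in>Z. T0 \<inter> F = T' \<inter> F" by blast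
  qed
  then show "T' \<in> Z" using Z unfolding closed2_def by blast
qed

text \<open>A nonempty closed invariant \<open>Z\<close> inside the orbit closure of \<open>T = S\<cdot>p\<close> contains some
  \<open>T\<cdot>q = S\<cdot>(pq)\<close>; as \<open>M\<close> is minimal, \<open>p = (pq)q'\<close> for some \<open>q' \<in> M\<close>, so \<open>T = (T\<cdot>q)\<cdot>q' \<in> Z\<close>.\<close>
lemma minimal_subset_act2_sg:
  assumes m: "minimal_subflow V R A M" and p: "p \<in> M"
  shows "minimal_subset V R A n (act2_sg n S p)"
proof -
  have sf: "subflow V R A M" using m unfolding minimal_subflow_def by blast
  note d = subflowD[OF sf]
  have pS: "p \<in> SS" using p d(3) by blast
  define T where "T = act2_sg n S p"
  have Ts: "T \<subseteq> HH n" unfolding T_def by (rule act2_sg_subset)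
  have inv: "\<forall>T'\<in>orbit_cl n T. \<forall>g\<in>GG. act2H n T' g \<in> orbit_cl n T" using orbit_cl_invariant by blast
  have "minimal_flow2 V R A n (orbit_cl n T)" unfolding minimal_flow2_def
  proof (intro conjI allI impI)
    show "orbit_cl n T \<noteq> {}" using orbit_cl_self[OF Ts] by blast
    show "closed_H n (orbit_cl n T)" by (rule orbit_cl_closed)
    show "\<forall>T'\<in>orbit_cl n T. \<forall>g\<in>GG. act2H n T' g \<in> orbit_cl n T" by (rule inv)
    fix Z assume Z: "Z \<subseteq> orbit_cl n T \<and> Z \<noteq> {} \<and> closed_H n Z \<and> (\<forall>T'\<in>Z. \<forall>g\<in>GG. act2H n T' g \<in> Z)"
    then obtain z where z: "z \<in> Z" by blast
    then have "z \<in> orbit_cl n T" using Z by blast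
    then obtain q where q: "q \<in> SS" "act2_sg n T q = z" using orbit_cl_act2_sg by blast
    have "z = act2_sg n S (sg_mult p q)" using q act2_sg_mult[OF pS q(1)] unfolding T_def by simp
    define r where "r = sg_mult p q"
    have rM: "r \<in> M" unfolding r_def by (rule sg_mult_in_subflow[OF sf p q(1)])
    have rS: "r \<in> SS" using rM d(3) by blast
    have "p \<in> sg_mult r ` M" using sg_mult_image_minimal_subflow[OF m rM] p by simp
    then obtain q' where q': "q' \<in> M" "p = sg_mult r q'" by blast
    have q'S: "q' \<in> SS" using q'(1) d(3) by blast
    have "T = act2_sg n S (sg_mult r q')" unfolding T_def using q'(2) by simp
    also have "\<dots> = act2_sg n (act2_sg n S r) q'" by (rule act2_sg_mult[OF rS q'S])
    also have "\<dots> = act2_sg n z q'" using \<open>z = act2_sg n S (sg_mult p q)\<close> r_def by simp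
    finally have "T \<in> orbit_cl n z" using act2_sg_in_orbit_cl[OF q'S] by simp
    also have "orbit_cl n z \<subseteq> Z" using orbit_cl_subset[OF _ _ z] Z by blast
    finally have "T \<in> Z" .
    then have "orbit_cl n T \<subseteq> Z" using orbit_cl_subset Z by blast
    then show "Z = orbit_cl n T" using Z by blast
  qed
  then show ?thesis unfolding minimal_subset_def T_def using act2_sg_subset by blast
qed

lemma minimal_flow2_eqI:
  assumes "minimal_flow2 V R A n Y" "Z \<subseteq> Y" "Z \<noteq> {}" "closed_H n Z"
    "\<And>T g. T \<in> Z \<Longrightarrow> g \<in> GG \<Longrightarrow> act2H n T g \<in> Z"
  shows "Z = Y"
  using assms unfolding minimal_flow2_def by blast

lemma act2_sg_image_closed:
  assumes C: "sg_closed_set C" shows "closed_H n ((\<lambda>q. act2_sg n T q) ` C)"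
  unfolding closed2_def
proof (intro conjI allI impI)
  show "(\<lambda>q. act2_sg n T q) ` C \<subseteq> Pow (HH n)" using act2_sg_subset by blast
  fix T' assume T': "T' \<subseteq> HH n \<and> (\<forall>F. finite F \<and> F \<subseteq> HH n \<longrightarrow> (\<exists>T''\<in>(\<lambda>q. act2_sg n T q) ` C. T'' \<inter> F = T' \<inter> F))"
  have "\<exists>q\<in>C. act2_sg n T q = T'"
    by (rule act2_sg_limit[OF C]) (use T' in blast)+
  then show "T' \<in> (\<lambda>q. act2_sg n T q) ` C" by blast
qed

lemma minimal_subset_in_act2_sg_image:
  assumes M: "subflow V R A M" and T: "minimal_subset V R A n T"
  shows "T \<in> (\<lambda>q. act2_sg n T q) ` M"
proof -
  note d = subflowD[OF M]
  have Ts: "T \<subseteq> HH n" and mf: "minimal_flow2 V R A n (orbit_cl n T)" using T unfolding minimal_subset_def by auto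
  have "(\<lambda>q. act2_sg n T q) ` M = orbit_cl n T"
  proof (rule minimal_flow2_eqI[OF mf])
    show "(\<lambda>q. act2_sg n T q) ` M \<subseteq> orbit_cl n T" using act2_sg_in_orbit_cl d(3) by blast
    show "(\<lambda>q. act2_sg n T q) ` M \<noteq> {}" using d(1) by blast
    show "closed_H n ((\<lambda>q. act2_sg n T q) ` M)" by (rule act2_sg_image_closed[OF d(2)])
    show "act2H n T' g \<in> (\<lambda>q. act2_sg n T q) ` M"
      if T': "T' \<in> (\<lambda>q. act2_sg n T q) ` M" and g: "g \<in> GG" for T' g
    proof -
      obtain q where q: "q \<in> M" "T' = act2_sg n T q" using T' by blast
      then have "act2H n T' g = act2_sg n T (act V R A q g)" using act2_act2_sg[OF _ g] d(3) by blast
      then show ?thesis using d(4)[OF q(1) g] by blast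
    qed
  qed
  then show ?thesis using orbit_cl_self[OF Ts] by simp
qed

text \<open>The stabiliser \<open>{q \<in> M. T\<cdot>q = T}\<close> is a nonempty closed subsemigroup, so it contains an idempotent.\<close>
lemma minimal_subset_idempotent_fixed:
  assumes m: "minimal_subflow V R A M" and T: "minimal_subset V R A n T"
  shows "\<exists>u\<in>M. sg_mult u u = u \<and> act2_sg n T u = T"
proof -
  have sf: "subflow V R A M" using m unfolding minimal_subflow_def by blast
  note d = subflowD[OF sf]
  have Ts: "T \<subseteq> HH n" using T unfolding minimal_subset_def by blast
  define Q where "Q = {q \<in> M. act2_sg n T q = T}"
  have "closed_subsemigroup Q"
    unfolding closed_subsemigroup_def
  proof (intro conjI ballI)
    show "Q \<noteq> {}" using minimal_subset_in_act2_sg_image[OF sf T] unfolding Q_def by force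
    have "Q = M \<inter> {q \<in> SS. act2_sg n T q \<inter> HH n = T \<inter> HH n}"
      using d(3) act2_sg_subset Ts unfolding Q_def by (auto simp: Int_absorb2)
    then show "sg_closed_set Q" using sg_closed_Int[OF d(2) sg_closed_act2_sg_agree[of "HH n" n T T]] by simp
  next
    fix p q assume "p \<in> Q" "q \<in> Q"
    then have pq: "p \<in> M" "q \<in> M" "act2_sg n T p = T" "act2_sg n T q = T" unfolding Q_def by auto
    have pS: "p \<in> SS" and qS: "q \<in> SS" using pq d(3) by auto
    have "act2_sg n T (sg_mult p q) = T" using act2_sg_mult[OF pS qS] pq by simp
    moreover have "sg_mult p q \<in> M" by (rule sg_mult_in_subflow[OF sf pq(1) qS])
    ultimately show "sg_mult p q \<in> Q" unfolding Q_def by blast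
  qed
  then show ?thesis using closed_subsemigroup_idempotent unfolding Q_def by blast
qed

lemma minimal_subset_lift:
  assumes m: "minimal_subflow V R A M" and T: "minimal_subset V R A n T" and nN: "n \<le> N"
  shows "minimal_subset V R A N (lift N n T)"
proof -
  obtain u where u: "u \<in> M" "act2_sg n T u = T" using minimal_subset_idempotent_fixed[OF m T] by blast
  have sf: "subflow V R A M" using m unfolding minimal_subflow_def by blast
  have uS: "u \<in> SS" using u(1) subflowD(3)[OF sf] by blast
  have "lift N n T = act2_sg N (lift N n T) u" using act2_sg_lift[OF uS nN, of T] u(2) by simp
  then show ?thesis using minimal_subset_act2_sg[OF m u(1), of N "lift N n T"] by simp
qed

section \<open>Separating points by retractions\<close>

lemma SG_separated_by_minimal_subset:
  assumes B: "\<forall>m. Bprime V R A m = Pow (HH m)" and a: "\<alpha> \<in> SS" and c: "\<gamma> \<in> SS" and ne: "\<alpha> \<noteq> \<gamma>"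
  shows "\<exists>n T. minimal_subset V R A n T \<and> (T \<in> \<alpha> n \<longleftrightarrow> T \<notin> \<gamma> n)"
proof (rule ccontr)
  assume agree: "\<not> ?thesis"
  obtain m S where S: "S \<in> \<alpha> m" "S \<notin> \<gamma> m" using SG_neq_witness[OF a c ne] by blast
  have Ss: "S \<subseteq> HH m" using SG_subset_H[OF a S(1)] .
  then have "S \<in> Bprime V R A m" using B by blast
  then obtain n where n: "m \<le> n" "lift n m S \<in> Bn V R A n" unfolding Bprime_def by blast
  have Gs: "{T. minimal_subset V R A n T} \<subseteq> Pow (HH n)" using minimal_subset_subset by blast
  have "lift n m S \<in> \<alpha> n \<longleftrightarrow> lift n m S \<in> \<gamma> n"
    using ultrafilter_on_gen_ba_cong[OF SG_ultrafilter[OF a] SG_ultrafilter[OF c] Gs] agree n(2)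
    unfolding Bn_def by blast
  then show False using SG_coherent[OF a n(1)] SG_coherent[OF c n(1)] S Ss by blast
qed

lemma retraction_separates_by_minimal_subset:
  assumes m: "minimal_subflow V R A M" and T: "minimal_subset V R A n T"
    and sep: "T \<in> \<alpha> n \<longleftrightarrow> T \<notin> \<gamma> n"
  shows "\<exists>\<phi>. retraction V R A M \<phi> \<and> \<phi> \<alpha> \<noteq> \<phi> \<gamma>"
proof -
  obtain u where u: "u \<in> M" "sg_mult u u = u" "act2_sg n T u = T"
    using minimal_subset_idempotent_fixed[OF m T] by blast
  have "T \<in> sg_mult u \<alpha> n \<longleftrightarrow> T \<in> \<alpha> n" "T \<in> sg_mult u \<gamma> n \<longleftrightarrow> T \<in> \<gamma> n"
    using u(3) minimal_subset_subset[OF T] by (simp_all add: sg_mult_iff)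
  then have "sg_mult u \<alpha> \<noteq> sg_mult u \<gamma>" using sep by metis
  then show ?thesis using idempotent_retraction[OF m u(1,2)] by blast
qed

lemma retractions_separate_if_Bprime_full:
  assumes "minimal_subflow V R A M" and "\<forall>m. Bprime V R A m = Pow (HH m)"
    and "\<alpha> \<in> SS" "\<gamma> \<in> SS" "\<alpha> \<noteq> \<gamma>"
  shows "\<exists>\<phi>. retraction V R A M \<phi> \<and> \<phi> \<alpha> \<noteq> \<phi> \<gamma>"
  using SG_separated_by_minimal_subset[OF assms(2-5)] retraction_separates_by_minimal_subset[OF assms(1)]
  by blast

text \<open>Every retraction is left multiplication by an element of \<open>M\<close>, and the translates
  \<open>T\<cdot>p\<close> by \<open>p \<in> M\<close> are minimal subsets; so a retraction cannot tell apart two points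
  that agree on all minimal subsets.\<close>
lemma retraction_cong_minimal_subsets:
  assumes m: "minimal_subflow V R A M" and \<phi>: "retraction V R A M \<phi>" and a: "\<alpha> \<in> SS" and c: "\<gamma> \<in> SS"
    and agree: "\<And>n T. minimal_subset V R A n T \<Longrightarrow> T \<in> \<alpha> n \<longleftrightarrow> T \<in> \<gamma> n"
  shows "\<phi> \<alpha> = \<phi> \<gamma>"
proof -
  have MS: "M \<subseteq> SS" using m subflowD(3) unfolding minimal_subflow_def by blast
  define p where "p = \<phi> (sg_point id_Aut)"
  have pM: "p \<in> M" unfolding p_def using \<phi> sg_point_in_SG[OF id_Aut_in_Aut] unfolding retraction_def by blast
  have "sg_mult p \<alpha> k = sg_mult p \<gamma> k" for k
    using agree[OF minimal_subset_act2_sg[OF m pM]] by (auto simp: sg_mult_iff)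
  then have "sg_mult p \<alpha> = sg_mult p \<gamma>" by blast
  then show ?thesis using retraction_eq_sg_mult[OF \<phi> MS] a c unfolding p_def by metis
qed

definition inseparable_pairs where
  "inseparable_pairs m0 S \<D> = {z \<in> GG \<times> GG. restrict (fst z) (A m0) \<in> S \<and> restrict (snd z) (A m0) \<notin> S
      \<and> (\<forall>(n, T)\<in>\<D>. restrict (fst z) (A n) \<in> T \<longleftrightarrow> restrict (snd z) (A n) \<in> T)}"

text \<open>Lift \<open>S\<close> and the members of \<open>\<D>\<close> to a common level \<open>N\<close>; there \<open>S\<close> is still outside the
  algebra generated by the minimal subsets, which contains the lifted members of \<open>\<D>\<close>.\<close>
lemma inseparable_pairs_nonempty:
  assumes m: "minimal_subflow V R A M" and S: "S \<subseteq> HH m0" "S \<notin> Bprime V R A m0"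
    and \<D>: "finite \<D>" "\<And>n T. (n, T) \<in> \<D> \<Longrightarrow> minimal_subset V R A n T"
  shows "inseparable_pairs m0 S \<D> \<noteq> {}"
proof -
  define N where "N = Max (insert m0 (fst ` \<D>))"
  have fin: "finite (insert m0 (fst ` \<D>))" using \<D>(1) by simp
  have m0N: "m0 \<le> N" unfolding N_def by (rule Max_ge[OF fin]) simp
  have nN: "n \<le> N" if "(n, T) \<in> \<D>" for n T
  proof -
    have "n \<in> insert m0 (fst ` \<D>)" using that by force
    then show ?thesis unfolding N_def by (rule Max_ge[OF fin])
  qed
  define \<C> where "\<C> = (\<lambda>(n, T). lift N n T) ` \<D>"
  have Gs: "{T. minimal_subset V R A N T} \<subseteq> Pow (HH N)" using minimal_subset_subset by blast
  have "finite \<C>" unfolding \<C>_def using \<D>(1) by simp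
  moreover have "\<C> \<subseteq> gen_ba (HH N) {T. minimal_subset V R A N T}"
    using minimal_subset_lift[OF m \<D>(2) nN] unfolding \<C>_def by (auto intro: gen_ba.gen)
  moreover have "lift N m0 S \<notin> gen_ba (HH N) {T. minimal_subset V R A N T}"
    using S m0N unfolding Bprime_def Bn_def by blast
  ultimately obtain x y where xy: "x \<in> lift N m0 S" "y \<in> HH N - lift N m0 S" "\<forall>c\<in>\<C>. x \<in> c \<longleftrightarrow> y \<in> c"
    using not_in_gen_ba_inseparable[OF Gs _ _ lift_subset] by blast
  obtain g h where g: "g \<in> GG" "restrict g (A N) = x" and h: "h \<in> GG" "restrict h (A N) = y"
    using H_extends_to_Aut xy(1,2) lift_subset by blast
  have "restrict g (A n) \<in> T \<longleftrightarrow> restrict h (A n) \<in> T" if "(n, T) \<in> \<D>" for n T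
  proof -
    have "lift N n T \<in> \<C>" using that unfolding \<C>_def by force
    then have "x \<in> lift N n T \<longleftrightarrow> y \<in> lift N n T" using xy(3) by blast
    then show ?thesis
      using restrict_in_lift_iff[OF g(1) nN[OF that]] restrict_in_lift_iff[OF h(1) nN[OF that]] g(2) h(2) by simp
  qed
  moreover have "restrict g (A m0) \<in> S" "restrict h (A m0) \<notin> S"
    using xy(1,2) restrict_in_lift_iff[OF g(1) m0N] restrict_in_lift_iff[OF h(1) m0N] g(2) h(2) by auto
  ultimately have "(g, h) \<in> inseparable_pairs m0 S \<D>" using g(1) h(1) unfolding inseparable_pairs_def by auto
  then show ?thesis by blast
qed

lemma inseparable_pairs_ultrafilter_exists:
  assumes m: "minimal_subflow V R A M" and S: "S \<subseteq> HH m0" "S \<notin> Bprime V R A m0"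
  shows "\<exists>W. ultrafilter_on (GG \<times> GG) W \<and> (\<forall>\<D>. finite \<D> \<and> (\<forall>(n, T)\<in>\<D>. minimal_subset V R A n T)
    \<longrightarrow> inseparable_pairs m0 S \<D> \<in> W)"
proof -
  define \<DD> where "\<DD> = {\<D>. finite \<D> \<and> (\<forall>(n, T)\<in>\<D>. minimal_subset V R A n T)}"
  have "\<exists>W. ultrafilter_on (GG \<times> GG) W \<and> inseparable_pairs m0 S ` \<DD> \<subseteq> W"
  proof (rule ultrafilter_on_exists)
    show "inseparable_pairs m0 S ` \<DD> \<subseteq> Pow (GG \<times> GG)" unfolding inseparable_pairs_def by blast
    have "{} \<in> \<DD>" unfolding \<DD>_def by simp
    then show "inseparable_pairs m0 S ` \<DD> \<noteq> {}" by blast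
    show "{} \<notin> inseparable_pairs m0 S ` \<DD>"
    proof
      assume "{} \<in> inseparable_pairs m0 S ` \<DD>"
      then obtain \<D> where "\<D> \<in> \<DD>" and empty: "inseparable_pairs m0 S \<D> = {}" by blast
      then have "finite \<D>" "\<And>n T. (n, T) \<in> \<D> \<Longrightarrow> minimal_subset V R A n T" unfolding \<DD>_def by auto
      then show False using inseparable_pairs_nonempty[OF m S] empty by blast
    qed
  next
    fix a b assume "a \<in> inseparable_pairs m0 S ` \<DD>" "b \<in> inseparable_pairs m0 S ` \<DD>"
    then obtain \<D>1 \<D>2 where \<D>: "\<D>1 \<in> \<DD>" "\<D>2 \<in> \<DD>"
      and ab: "a = inseparable_pairs m0 S \<D>1" "b = inseparable_pairs m0 S \<D>2" by blast
    have "\<D>1 \<union> \<D>2 \<in> \<DD>" using \<D> unfolding \<DD>_def by blast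
    moreover have "inseparable_pairs m0 S (\<D>1 \<union> \<D>2) \<subseteq> a \<inter> b"
      unfolding ab inseparable_pairs_def by blast
    ultimately show "\<exists>c\<in>inseparable_pairs m0 S ` \<DD>. c \<subseteq> a \<inter> b" by blast
  qed
  then show ?thesis unfolding \<DD>_def by blast
qed

text \<open>If \<open>S \<notin> B'\<^sub>m\<^sub>0\<close>, the two projections of an ultrafilter on pairs \<open>(g, h)\<close> that are separated by
  \<open>S\<close> but by no finite family of minimal subsets give two points of \<open>S(G)\<close> with the same property.\<close>
lemma SG_pair_agreeing_on_minimal_subsets:
  assumes m: "minimal_subflow V R A M" and S: "S \<subseteq> HH m0" "S \<notin> Bprime V R A m0"
  shows "\<exists>\<alpha>\<in>SS. \<exists>\<gamma>\<in>SS. S \<in> \<alpha> m0 \<and> S \<notin> \<gamma> m0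
    \<and> (\<forall>n T. minimal_subset V R A n T \<longrightarrow> (T \<in> \<alpha> n \<longleftrightarrow> T \<in> \<gamma> n))"
proof -
  define Z where "Z = GG \<times> GG"
  obtain W where W: "ultrafilter_on Z W" and base: "\<forall>\<D>. finite \<D> \<and> (\<forall>(n, T)\<in>\<D>. minimal_subset V R A n T)
    \<longrightarrow> inseparable_pairs m0 S \<D> \<in> W"
    using inseparable_pairs_ultrafilter_exists[OF m S] unfolding Z_def by blast
  have GG: "\<And>z. z \<in> Z \<Longrightarrow> fst z \<in> GG" "\<And>z. z \<in> Z \<Longrightarrow> snd z \<in> GG" unfolding Z_def by auto
  define \<alpha> where "\<alpha> = image_ultrafilter Z fst W"
  define \<gamma> where "\<gamma> = image_ultrafilter Z snd W"
  have \<alpha>: "\<alpha> \<in> SS" unfolding \<alpha>_def by (rule image_ultrafilter_in_SG[OF W GG(1)])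
  have \<gamma>: "\<gamma> \<in> SS" unfolding \<gamma>_def by (rule image_ultrafilter_in_SG[OF W GG(2)])
  have P0: "inseparable_pairs m0 S {} \<in> W" using base by simp
  have "{z \<in> Z. restrict (fst z) (A m0) \<in> S} \<in> W"
    by (rule ultrafilter_on_mono[OF W P0]) (auto simp: inseparable_pairs_def Z_def)
  then have "S \<in> \<alpha> m0" unfolding \<alpha>_def using S(1) by (simp add: image_ultrafilter_iff)
  moreover have "S \<notin> \<gamma> m0"
  proof
    assume "S \<in> \<gamma> m0"
    then have "{z \<in> Z. restrict (snd z) (A m0) \<in> S} \<inter> inseparable_pairs m0 S {} \<in> W"
      using ultrafilter_on_Int[OF W _ P0] unfolding \<gamma>_def by (simp add: image_ultrafilter_iff)
    moreover have "{z \<in> Z. restrict (snd z) (A m0) \<in> S} \<inter> inseparable_pairs m0 S {} = {}"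
      unfolding inseparable_pairs_def by blast
    ultimately show False using ultrafilter_on_empty[OF W] by simp
  qed
  moreover have "T \<in> \<alpha> n \<longleftrightarrow> T \<in> \<gamma> n" if T: "minimal_subset V R A n T" for n T
  proof -
    have "inseparable_pairs m0 S {(n, T)} \<in> W" using base T by simp
    moreover have "{z \<in> Z. restrict (fst z) (A n) \<in> T} \<inter> inseparable_pairs m0 S {(n, T)}
        = {z \<in> Z. restrict (snd z) (A n) \<in> T} \<inter> inseparable_pairs m0 S {(n, T)}"
      unfolding inseparable_pairs_def by auto
    ultimately have "{z \<in> Z. restrict (fst z) (A n) \<in> T} \<in> W \<longleftrightarrow> {z \<in> Z. restrict (snd z) (A n) \<in> T} \<in> W"
      by (rule ultrafilter_on_cong[OF W]) auto
    then show ?thesis unfolding \<alpha>_def \<gamma>_def by (simp add: image_ultrafilter_iff)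
  qed
  ultimately show ?thesis using \<alpha> \<gamma> by blast
qed

lemma in_Bprime_if_retractions_separate:
  assumes m: "minimal_subflow V R A M"
    and sep: "\<forall>\<alpha>\<in>SS. \<forall>\<gamma>\<in>SS. \<alpha> \<noteq> \<gamma> \<longrightarrow> (\<exists>\<phi>. retraction V R A M \<phi> \<and> \<phi> \<alpha> \<noteq> \<phi> \<gamma>)"
    and S: "S \<subseteq> HH m0"
  shows "S \<in> Bprime V R A m0"
proof (rule ccontr)
  assume "S \<notin> Bprime V R A m0"
  then obtain \<alpha> \<gamma> where \<alpha>\<gamma>: "\<alpha> \<in> SS" "\<gamma> \<in> SS" "S \<in> \<alpha> m0" "S \<notin> \<gamma> m0"
    and agree: "\<And>n T. minimal_subset V R A n T \<Longrightarrow> T \<in> \<alpha> n \<longleftrightarrow> T \<in> \<gamma> n"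
    using SG_pair_agreeing_on_minimal_subsets[OF m S] by blast
  then have "\<alpha> \<noteq> \<gamma>" by blast
  then obtain \<phi> where "retraction V R A M \<phi>" "\<phi> \<alpha> \<noteq> \<phi> \<gamma>" using sep \<alpha>\<gamma>(1,2) by blast
  then show False using retraction_cong_minimal_subsets[OF m _ \<alpha>\<gamma>(1,2) agree] by blast
qed

end

theorem mainTheorem17:
  fixes V :: "'a set" and R :: "'r \<Rightarrow> 'a list \<Rightarrow> bool" and A :: "nat \<Rightarrow> 'a set"
    and M :: "(nat \<Rightarrow> ('a \<Rightarrow> 'a) set set) set"
  assumes "countable V" and "infinite V"
    and "ultrahomogeneous V R"
    and "exhaustion V A"
    and "minimal_subflow V R A M"
  shows "(\<forall>\<alpha>\<in>SG V R A. \<forall>\<gamma>\<in>SG V R A. \<alpha> \<noteq> \<gamma> \<longrightarrow>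
            (\<exists>\<phi>. retraction V R A M \<phi> \<and> \<phi> \<alpha> \<noteq> \<phi> \<gamma>))
         \<longleftrightarrow> (\<forall>m. Bprime V R A m = Pow (H V R A m))"
proof -
  interpret fraisse_exhaustion V R A using assms(3,4) by unfold_locales
  show ?thesis
  proof
    assume "\<forall>\<alpha>\<in>SG V R A. \<forall>\<gamma>\<in>SG V R A. \<alpha> \<noteq> \<gamma> \<longrightarrow> (\<exists>\<phi>. retraction V R A M \<phi> \<and> \<phi> \<alpha> \<noteq> \<phi> \<gamma>)"
    then show "\<forall>m. Bprime V R A m = Pow (H V R A m)"
      using in_Bprime_if_retractions_separate[OF assms(5)] unfolding Bprime_def by blast
  next
    assume "\<forall>m. Bprime V R A m = Pow (H V R A m)"
    then show "\<forall>\<alpha>\<in>SG V R A. \<forall>\<gamma>\<in>SG V R A. \<alpha> \<noteq> \<gamma> \<longrightarrow> (\<exists>\<phi>. retraction V R A M \<phi> \<and> \<phi> \<alpha> \<noteq> \<phi> \<gamma>)"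
      using retractions_separate_if_Bprime_full[OF assms(5)] by blast
  qed
qed

end
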